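(* Let $(\Omega,\mathcal{F},P)$ be an adequate probability space. A functional $I:B_0(\Omega,\mathcal{F})\to\mathbb{R}$ is strongly monotone, constant-additive, positively homogeneous, and additive in concordant sums if and only if there exists $\beta>-1$ such that $I=\mathbb{E}_\beta$.
   Context: Adequate: $P$ nonatomic or $\mathcal{F}$ generated by a finite partition over which $P$ is uniform. $B_0(\Omega,\mathcal{F})$: $\mathcal{F}$-measurable real functions with finitely many values. $\mathbb{E}_\beta[X]$ is the unique $v$ with $\mathbb{E}[(X-v)^+]=(1+\beta)\mathbb{E}[(v-X)^+]$. Strongly monotone: if $P(X\ge t)\ge P(Y\ge t)$ for all $t\in\mathbb{R}$ then $I(X)\ge I(Y)$, strictly if strict for some $t$. Constant-additive: $I(X+m)=I(X)+m$ for $m\in\mathbb{R}$. Positively homogeneous: $I(\lambda X)=\lambda I(X)$ for $\lambda\ge0$. Additive in concordant sums: if $\{\omega:X(\omega)<I(X)\}=\{\omega:Y(\omega)<I(Y)\}$ then $I(X+Y)=I(X)+I(Y)$. *)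

theory Defs
  imports "HOL-Probability.Probability"
begin

definition nonatomic :: "'a measure \<Rightarrow> bool" where
  "nonatomic M \<longleftrightarrow> (\<forall>A\<in>sets M. measure M A > 0 \<longrightarrow>
      (\<exists>B\<in>sets M. B \<subseteq> A \<and> 0 < measure M B \<and> measure M B < measure M A))"

definition finite_uniform :: "'a measure \<Rightarrow> bool" where
  "finite_uniform M \<longleftrightarrow> (\<exists>Q. finite Q \<and> partition_on (space M) Q \<and>
      sets M = sigma_sets (space M) Q \<and>
      (\<forall>B\<in>Q. measure M B = 1 / real (card Q)))"

definition adequate :: "'a measure \<Rightarrow> bool" where
  "adequate M \<longleftrightarrow> nonatomic M \<or> finite_uniform M"

definition B0 :: "'a measure \<Rightarrow> ('a \<Rightarrow> real) set" where
  "B0 M = {X. X \<in> borel_measurable M \<and> finite (X ` space M)}"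

definition E_beta :: "'a measure \<Rightarrow> real \<Rightarrow> ('a \<Rightarrow> real) \<Rightarrow> real" where
  "E_beta M \<beta> X = (THE v. (\<integral>\<omega>. max (X \<omega> - v) 0 \<partial>M) =
                          (1 + \<beta>) * (\<integral>\<omega>. max (v - X \<omega>) 0 \<partial>M))"

definition strongly_monotone :: "'a measure \<Rightarrow> (('a \<Rightarrow> real) \<Rightarrow> real) \<Rightarrow> bool" where
  "strongly_monotone M I \<longleftrightarrow> (\<forall>X\<in>B0 M. \<forall>Y\<in>B0 M.
     (\<forall>t. measure M {\<omega>\<in>space M. X \<omega> \<ge> t} \<ge> measure M {\<omega>\<in>space M. Y \<omega> \<ge> t}) \<longrightarrow>
       (I X \<ge> I Y \<and>
        ((\<exists>t. measure M {\<omega>\<in>space M. X \<omega> \<ge> t} > measure M {\<omega>\<in>space M. Y \<omega> \<ge> t})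
           \<longrightarrow> I X > I Y)))"

definition constant_additive :: "'a measure \<Rightarrow> (('a \<Rightarrow> real) \<Rightarrow> real) \<Rightarrow> bool" where
  "constant_additive M I \<longleftrightarrow> (\<forall>X\<in>B0 M. \<forall>m::real. I (\<lambda>\<omega>. X \<omega> + m) = I X + m)"

definition positively_homogeneous :: "'a measure \<Rightarrow> (('a \<Rightarrow> real) \<Rightarrow> real) \<Rightarrow> bool" where
  "positively_homogeneous M I \<longleftrightarrow>
     (\<forall>X\<in>B0 M. \<forall>c::real. c \<ge> 0 \<longrightarrow> I (\<lambda>\<omega>. c * X \<omega>) = c * I X)"

definition concordant_additive :: "'a measure \<Rightarrow> (('a \<Rightarrow> real) \<Rightarrow> real) \<Rightarrow> bool" where
  "concordant_additive M I \<longleftrightarrow> (\<forall>X\<in>B0 M. \<forall>Y\<in>B0 M.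
     {\<omega>\<in>space M. X \<omega> < I X} = {\<omega>\<in>space M. Y \<omega> < I Y} \<longrightarrow>
       I (\<lambda>\<omega>. X \<omega> + Y \<omega>) = I X + I Y)"

end

theory Submission
  imports Defs
begin

lemma B0_iff_simple_function: "X \<in> B0 M \<longleftrightarrow> simple_function M X"
  by (auto simp: B0_def simple_function_iff_borel_measurable)

lemma B0_borel_measurable: "X \<in> B0 M \<Longrightarrow> X \<in> borel_measurable M"
  by (simp add: B0_def)

lemma B0_finite_range: "X \<in> B0 M \<Longrightarrow> finite (X ` space M)"
  by (simp add: B0_def)

lemma B0_const [simp, intro]: "(\<lambda>\<omega>. c) \<in> B0 M"
  by (simp add: B0_iff_simple_function)

lemma B0_indicator [intro]: "A \<in> sets M \<Longrightarrow> indicator A \<in> B0 M"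
  by (simp add: B0_iff_simple_function)

lemma B0_compose: "X \<in> B0 M \<Longrightarrow> (\<lambda>\<omega>. f (X \<omega>)) \<in> B0 M"
  by (simp add: B0_iff_simple_function simple_function_compose1)

lemma B0_compose2: "X \<in> B0 M \<Longrightarrow> Y \<in> B0 M \<Longrightarrow> (\<lambda>\<omega>. f (X \<omega>) (Y \<omega>)) \<in> B0 M"
  by (simp add: B0_iff_simple_function simple_function_compose2)

lemma B0_add [intro]: "X \<in> B0 M \<Longrightarrow> Y \<in> B0 M \<Longrightarrow> (\<lambda>\<omega>. X \<omega> + Y \<omega>) \<in> B0 M"
  and B0_diff [intro]: "X \<in> B0 M \<Longrightarrow> Y \<in> B0 M \<Longrightarrow> (\<lambda>\<omega>. X \<omega> - Y \<omega>) \<in> B0 M"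
  and B0_mult [intro]: "X \<in> B0 M \<Longrightarrow> Y \<in> B0 M \<Longrightarrow> (\<lambda>\<omega>. X \<omega> * Y \<omega>) \<in> B0 M"
  by (rule B0_compose2; assumption)+

lemma B0_scaled_indicator [intro]: "A \<in> sets M \<Longrightarrow> (\<lambda>\<omega>. c * indicator A \<omega>) \<in> B0 M"
  by (rule B0_mult[OF B0_const B0_indicator])

lemma B0_cong: "X \<in> B0 M \<Longrightarrow> (\<And>\<omega>. \<omega> \<in> space M \<Longrightarrow> Y \<omega> = X \<omega>) \<Longrightarrow> Y \<in> B0 M"
  using simple_function_cong by (metis B0_iff_simple_function)

lemma B0_sets [measurable]: "X \<in> B0 M \<Longrightarrow> {\<omega>\<in>space M. P (X \<omega>)} \<in> sets M"
  using simple_functionD(2)[of M X "Collect P"] by (simp add: B0_iff_simple_function vimage_def Int_def conj_commute)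

context prob_space
begin

lemma B0_simple_bochner_integrable:
  "X \<in> B0 M \<Longrightarrow> Bochner_Integration.simple_bochner_integrable M X"
  by (intro Bochner_Integration.simple_bochner_integrable.intros)
    (auto simp: B0_iff_simple_function emeasure_eq_measure)

lemma B0_integrable: "X \<in> B0 M \<Longrightarrow> integrable M (\<lambda>\<omega>. f (X \<omega>) :: real)"
  by (rule integrableI_simple_bochner_integrable[OF B0_simple_bochner_integrable[OF B0_compose]])

lemma B0_integral:
  fixes f :: "real \<Rightarrow> real"
  assumes "X \<in> B0 M"
  shows "(\<integral>\<omega>. f (X \<omega>) \<partial>M) = (\<Sum>x\<in>X ` space M. f x * prob {\<omega>\<in>space M. X \<omega> = x})"
proof -
  have "(\<integral>\<omega>. f (X \<omega>) \<partial>M) = Bochner_Integration.simple_bochner_integral M (\<lambda>\<omega>. f (X \<omega>))"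
    using B0_simple_bochner_integrable[OF B0_compose[OF assms]]
    by (rule simple_bochner_integrable_eq_integral[symmetric])
  also have "\<dots> = (\<Sum>x\<in>X ` space M. prob {\<omega>\<in>space M. X \<omega> = x} *\<^sub>R f x)"
    by (rule simple_bochner_integral_partition[OF B0_simple_bochner_integrable[OF B0_compose[OF assms]]])
      (use assms in \<open>auto simp: B0_iff_simple_function\<close>)
  finally show ?thesis by (simp add: mult.commute)
qed

lemma B0_ex_atom:
  assumes "X \<in> B0 M"
  shows "\<exists>x\<in>X ` space M. prob {\<omega>\<in>space M. X \<omega> = x} > 0"
proof (rule ccontr)
  assume "\<not> ?thesis"
  then have "(\<Sum>x\<in>X ` space M. 1 * prob {\<omega>\<in>space M. X \<omega> = x}) = 0"
    by (intro sum.neutral) (auto simp: not_less intro: antisym)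
  then show False
    using B0_integral[OF assms, of "\<lambda>_. 1"] prob_space by simp
qed

end

definition expectile_ident :: "real \<Rightarrow> real \<Rightarrow> real" where
  "expectile_ident \<beta> y = max y 0 - (1 + \<beta>) * max (- y) 0"

lemma expectile_ident_if: "expectile_ident \<beta> y = (if 0 \<le> y then y else (1 + \<beta>) * y)"
  by (auto simp: expectile_ident_def max_def)

lemma expectile_ident_strict_mono:
  assumes "\<beta> > -1" shows "strict_mono (expectile_ident \<beta>)"
proof (rule strict_monoI)
  fix y z :: real assume "y < z"
  moreover have "(1 + \<beta>) * y < (1 + \<beta>) * z" if "y < z" for y z
    using assms that by simp
  moreover have "(1 + \<beta>) * y < 0" if "y < 0" using assms that by (simp add: mult_pos_neg)
  ultimately show "expectile_ident \<beta> y < expectile_ident \<beta> z"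
    by (auto simp: expectile_ident_if)
qed

lemma expectile_ident_nonneg: "0 \<le> y \<Longrightarrow> 0 \<le> expectile_ident \<beta> y"
  by (simp add: expectile_ident_if)

lemma expectile_ident_nonpos: "\<beta> > -1 \<Longrightarrow> y \<le> 0 \<Longrightarrow> expectile_ident \<beta> y \<le> 0"
  by (simp add: expectile_ident_if mult_nonneg_nonpos)

context prob_space
begin

lemma integral_expectile_ident:
  assumes "X \<in> B0 M"
  shows "(\<integral>\<omega>. expectile_ident \<beta> (X \<omega> - v) \<partial>M) =
    (\<integral>\<omega>. max (X \<omega> - v) 0 \<partial>M) - (1 + \<beta>) * (\<integral>\<omega>. max (v - X \<omega>) 0 \<partial>M)"
  using B0_integrable[OF assms, of "\<lambda>x. max (x - v) 0"] B0_integrable[OF assms, of "\<lambda>x. max (v - x) 0"]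
  by (simp add: expectile_ident_def)

lemma integral_expectile_ident_strict_antimono:
  assumes X: "X \<in> B0 M" and "\<beta> > -1" "v < w"
  shows "(\<integral>\<omega>. expectile_ident \<beta> (X \<omega> - w) \<partial>M) < (\<integral>\<omega>. expectile_ident \<beta> (X \<omega> - v) \<partial>M)"
proof -
  let ?p = "\<lambda>x. prob {\<omega>\<in>space M. X \<omega> = x}"
  have less: "expectile_ident \<beta> (x - w) < expectile_ident \<beta> (x - v)" for x
    using expectile_ident_strict_mono[OF \<open>\<beta> > -1\<close>] \<open>v < w\<close> by (simp add: strict_mono_less)
  obtain x where x: "x \<in> X ` space M" "?p x > 0"
    using B0_ex_atom[OF X] by blast
  have "(\<Sum>x\<in>X ` space M. expectile_ident \<beta> (x - w) * ?p x) < (\<Sum>x\<in>X ` space M. expectile_ident \<beta> (x - v) * ?p x)"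
  proof (rule sum_strict_mono_ex1)
    show "\<forall>x\<in>X ` space M. expectile_ident \<beta> (x - w) * ?p x \<le> expectile_ident \<beta> (x - v) * ?p x"
      using less by (intro ballI mult_right_mono less_imp_le measure_nonneg)
    show "\<exists>x\<in>X ` space M. expectile_ident \<beta> (x - w) * ?p x < expectile_ident \<beta> (x - v) * ?p x"
      using mult_strict_right_mono[OF less x(2)] x(1) by blast
  qed (rule B0_finite_range[OF X])
  then show ?thesis
    using B0_integral[OF X, of "\<lambda>x. expectile_ident \<beta> (x - w)"]
      B0_integral[OF X, of "\<lambda>x. expectile_ident \<beta> (x - v)"] by simp
qed

lemma integral_expectile_ident_root:
  assumes X: "X \<in> B0 M" and "\<beta> > -1"
  shows "\<exists>v. (\<integral>\<omega>. expectile_ident \<beta> (X \<omega> - v) \<partial>M) = 0"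
proof -
  let ?F = "\<lambda>v. \<Sum>x\<in>X ` space M. expectile_ident \<beta> (x - v) * prob {\<omega>\<in>space M. X \<omega> = x}"
  let ?a = "Min (X ` space M)" and ?b = "Max (X ` space M)"
  have fin: "finite (X ` space M)" and ne: "X ` space M \<noteq> {}"
    using B0_finite_range[OF X] not_empty by auto
  have "?F ?b \<le> 0"
    using fin ne \<open>\<beta> > -1\<close> by (intro sum_nonpos mult_nonpos_nonneg expectile_ident_nonpos) auto
  moreover have "0 \<le> ?F ?a"
    using fin ne by (intro sum_nonneg mult_nonneg_nonneg expectile_ident_nonneg) auto
  moreover have "?a \<le> ?b"
    using fin ne by simp
  moreover have "continuous_on {?a..?b} ?F"
    unfolding expectile_ident_def by (intro continuous_intros)
  ultimately obtain v where "?F v = 0"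
    using IVT2'[of ?F ?b 0 ?a] by auto
  then show ?thesis
    using B0_integral[OF X, of "\<lambda>x. expectile_ident \<beta> (x - v)"] by auto
qed

lemma E_beta_eq_iff:
  assumes X: "X \<in> B0 M" and "\<beta> > -1"
  shows "E_beta M \<beta> X = v \<longleftrightarrow> (\<integral>\<omega>. expectile_ident \<beta> (X \<omega> - v) \<partial>M) = 0"
proof -
  have unique: "u = w" if "(\<integral>\<omega>. expectile_ident \<beta> (X \<omega> - u) \<partial>M) = 0"
    "(\<integral>\<omega>. expectile_ident \<beta> (X \<omega> - w) \<partial>M) = 0" for u w
    using integral_expectile_ident_strict_antimono[OF assms, of u w]
      integral_expectile_ident_strict_antimono[OF assms, of w u] that
    by (cases u w rule: linorder_cases) auto
  obtain r where r: "(\<integral>\<omega>. expectile_ident \<beta> (X \<omega> - r) \<partial>M) = 0"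
    using integral_expectile_ident_root[OF assms] by blast
  have "E_beta M \<beta> X = r"
    unfolding E_beta_def
  proof (rule the_equality)
    show "(\<integral>\<omega>. max (X \<omega> - r) 0 \<partial>M) = (1 + \<beta>) * (\<integral>\<omega>. max (r - X \<omega>) 0 \<partial>M)"
      using r by (simp add: integral_expectile_ident[OF X])
    fix u assume "(\<integral>\<omega>. max (X \<omega> - u) 0 \<partial>M) = (1 + \<beta>) * (\<integral>\<omega>. max (u - X \<omega>) 0 \<partial>M)"
    then show "u = r"
      using r unique[of u r] by (simp add: integral_expectile_ident[OF X])
  qed
  then show ?thesis using r unique by blast
qed

lemma E_beta_root:
  "X \<in> B0 M \<Longrightarrow> \<beta> > -1 \<Longrightarrow> (\<integral>\<omega>. expectile_ident \<beta> (X \<omega> - E_beta M \<beta> X) \<partial>M) = 0"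
  using E_beta_eq_iff by blast

end

lemma expectile_ident_scale: "0 \<le> c \<Longrightarrow> expectile_ident \<beta> (c * y) = c * expectile_ident \<beta> y"
  by (auto simp: expectile_ident_if zero_le_mult_iff)

lemma expectile_ident_add:
  "(y < 0 \<longleftrightarrow> z < 0) \<Longrightarrow> expectile_ident \<beta> (y + z) = expectile_ident \<beta> y + expectile_ident \<beta> z"
  by (auto simp: expectile_ident_if algebra_simps)

lemma telescoping_repr:
  fixes g :: "real \<Rightarrow> real"
  assumes "finite Z" "x \<in> Z"
  shows "g x = g (Min Z) +
    (\<Sum>z\<in>Z - {Min Z}. (g z - g (Max {z'\<in>Z. z' < z})) * (if z \<le> x then 1 else 0))"
  using assms
proof (induction Z arbitrary: x rule: finite_linorder_max_induct)
  case empty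
  then show ?case by simp
next
  case (insert b A)
  show ?case
  proof (cases "A = {}")
    case True
    then show ?thesis using insert.prems by simp
  next
    case False
    have "Min A \<in> A" using insert.hyps(1) False by simp
    then have "Min A < b" using insert.hyps(2) by blast
    then have min: "Min (insert b A) = Min A"
      using Min_insert[OF insert.hyps(1) False] by simp
    have pred: "{z'. (z' = b \<or> z' \<in> A) \<and> z' < z} = {z'\<in>A. z' < z}" if "z \<in> A" for z
      using insert.hyps(2) that by auto
    have split: "insert b A - {Min (insert b A)} = insert b (A - {Min A})"
      using min \<open>Min A \<in> A\<close> insert.hyps(2) by auto
    have b_notin: "b \<notin> A - {Min A}" using insert.hyps(2) by auto
    have below_b: "{z'\<in>insert b A. z' < b} = A" using insert.hyps(2) by auto
    have sum: "(\<Sum>z\<in>insert b A - {Min (insert b A)}. (g z - g (Max {z'\<in>insert b A. z' < z})) * (if z \<le> y then 1 else 0))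
        = (g b - g (Max A)) * (if b \<le> y then 1 else 0) +
          (\<Sum>z\<in>A - {Min A}. (g z - g (Max {z'\<in>A. z' < z})) * (if z \<le> y then 1 else 0))" for y
      unfolding split sum.insert[OF finite_Diff[OF insert.hyps(1)] b_notin] below_b
      by (intro arg_cong2[where f = "(+)"] refl sum.cong) (auto simp: pred)
    show ?thesis
    proof (cases "x = b")
      case True
      have "Max A \<in> A" using insert(1) False by simp
      then have "g (Max A) = g (Min A) + (\<Sum>z\<in>A - {Min A}. (g z - g (Max {z'\<in>A. z' < z})) * (if z \<le> Max A then 1 else 0))"
        by (rule insert.IH)
      also have "(\<Sum>z\<in>A - {Min A}. (g z - g (Max {z'\<in>A. z' < z})) * (if z \<le> Max A then 1 else 0))
          = (\<Sum>z\<in>A - {Min A}. (g z - g (Max {z'\<in>A. z' < z})) * (if z \<le> b then 1 else 0))"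
        using insert by (intro sum.cong) (auto intro: less_imp_le)
      finally show ?thesis using True sum[of b] min by simp
    next
      case False
      then have "x \<in> A" and "\<not> b \<le> x" using insert by auto
      then show ?thesis using sum[of x] min insert.IH by simp
    qed
  qed
qed

context prob_space
begin

lemma integral_telescoping:
  fixes g :: "real \<Rightarrow> real"
  assumes X: "X \<in> B0 M" and Z: "finite Z" "X ` space M \<subseteq> Z"
  shows "(\<integral>\<omega>. g (X \<omega>) \<partial>M) =
    g (Min Z) + (\<Sum>z\<in>Z - {Min Z}. (g z - g (Max {z'\<in>Z. z' < z})) * prob {\<omega>\<in>space M. z \<le> X \<omega>})"
proof -
  let ?\<delta> = "\<lambda>z. g z - g (Max {z'\<in>Z. z' < z})"
  have "(\<integral>\<omega>. g (X \<omega>) \<partial>M) =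
      (\<integral>\<omega>. g (Min Z) + (\<Sum>z\<in>Z - {Min Z}. ?\<delta> z * indicator {\<omega>\<in>space M. z \<le> X \<omega>} \<omega>) \<partial>M)"
  proof (rule Bochner_Integration.integral_cong[OF refl])
    fix \<omega> assume "\<omega> \<in> space M"
    moreover have "X \<omega> \<in> Z" using Z(2) \<open>\<omega> \<in> space M\<close> by auto
    ultimately show "g (X \<omega>) = g (Min Z) + (\<Sum>z\<in>Z - {Min Z}. ?\<delta> z * indicator {\<omega>\<in>space M. z \<le> X \<omega>} \<omega>)"
      using telescoping_repr[OF Z(1), of "X \<omega>" g] by (simp add: indicator_def of_bool_def)
  qed
  also have "\<dots> = g (Min Z) + (\<Sum>z\<in>Z - {Min Z}. ?\<delta> z * prob {\<omega>\<in>space M. z \<le> X \<omega>})"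
    using B0_sets[OF X] by (simp add: emeasure_eq_measure prob_space)
  finally show ?thesis .
qed

lemma stoch_dom_strict_witness:
  assumes X: "X \<in> B0 M" and Y: "Y \<in> B0 M"
    and t: "prob {\<omega>\<in>space M. t \<le> Y \<omega>} < prob {\<omega>\<in>space M. t \<le> X \<omega>}"
  defines "Z \<equiv> X ` space M \<union> Y ` space M"
  shows "\<exists>z\<in>Z - {Min Z}. prob {\<omega>\<in>space M. z \<le> Y \<omega>} < prob {\<omega>\<in>space M. z \<le> X \<omega>}"
proof -
  have fin: "finite Z" using X Y by (simp add: Z_def B0_finite_range)
  let ?Zt = "{z\<in>Z. t \<le> z}"
  have "?Zt \<noteq> {}"
  proof
    assume "?Zt = {}"
    then have "{\<omega>\<in>space M. t \<le> X \<omega>} = {}" by (auto simp: Z_def)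
    then have "prob {\<omega>\<in>space M. t \<le> X \<omega>} = 0" by (metis measure_empty)
    then show False using t measure_nonneg[of M "{\<omega>\<in>space M. t \<le> Y \<omega>}"] by linarith
  qed
  define z where "z = Min ?Zt"
  have z: "z \<in> Z" "t \<le> z" using Min_in[of ?Zt] fin \<open>?Zt \<noteq> {}\<close> by (auto simp: z_def)
  have same: "{\<omega>\<in>space M. t \<le> V \<omega>} = {\<omega>\<in>space M. z \<le> V \<omega>}" if "V ` space M \<subseteq> Z" for V
    using that fin z(2) by (auto simp: z_def intro!: Min_le order_trans[OF z(2)])
  have strict: "prob {\<omega>\<in>space M. z \<le> Y \<omega>} < prob {\<omega>\<in>space M. z \<le> X \<omega>}"
    using t same[of X] same[of Y] by (simp add: Z_def)
  have "z \<noteq> Min Z"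
  proof
    assume "z = Min Z"
    then have "{\<omega>\<in>space M. z \<le> Y \<omega>} = space M" using fin by (auto simp: Z_def)
    then show False using strict prob_space prob_le_1[of "{\<omega>\<in>space M. z \<le> X \<omega>}"] by simp
  qed
  then show ?thesis using z strict by blast
qed

lemma integral_stoch_dom_mono:
  fixes g :: "real \<Rightarrow> real"
  assumes X: "X \<in> B0 M" and Y: "Y \<in> B0 M" and g: "strict_mono g"
    and dom: "\<And>t. prob {\<omega>\<in>space M. t \<le> Y \<omega>} \<le> prob {\<omega>\<in>space M. t \<le> X \<omega>}"
  shows "(\<integral>\<omega>. g (Y \<omega>) \<partial>M) \<le> (\<integral>\<omega>. g (X \<omega>) \<partial>M)"
    and "(\<exists>t. prob {\<omega>\<in>space M. t \<le> Y \<omega>} < prob {\<omega>\<in>space M. t \<le> X \<omega>}) \<Longrightarrow>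
         (\<integral>\<omega>. g (Y \<omega>) \<partial>M) < (\<integral>\<omega>. g (X \<omega>) \<partial>M)"
proof -
  define Z where "Z = X ` space M \<union> Y ` space M"
  have fin: "finite Z" and ne: "Z \<noteq> {}" using X Y not_empty by (auto simp: Z_def B0_finite_range)
  define d where "d z = (g z - g (Max {z'\<in>Z. z' < z})) *
    (prob {\<omega>\<in>space M. z \<le> X \<omega>} - prob {\<omega>\<in>space M. z \<le> Y \<omega>})" for z
  have diff: "(\<integral>\<omega>. g (X \<omega>) \<partial>M) - (\<integral>\<omega>. g (Y \<omega>) \<partial>M) = (\<Sum>z\<in>Z - {Min Z}. d z)"
    using integral_telescoping[OF X fin, of g] integral_telescoping[OF Y fin, of g]
    by (simp add: Z_def d_def sum_subtractf right_diff_distrib)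
  have step_pos: "g (Max {z'\<in>Z. z' < z}) < g z" if "z \<in> Z - {Min Z}" for z
  proof -
    have "Min Z \<le> z" "Min Z \<in> Z" using that fin ne by auto
    then have "Min Z \<in> {z'\<in>Z. z' < z}" using that by auto
    then have "Max {z'\<in>Z. z' < z} \<in> {z'\<in>Z. z' < z}" using fin by (intro Max_in) auto
    then show ?thesis using g by (simp add: strict_mono_less)
  qed
  have d_nonneg: "0 \<le> d z" if "z \<in> Z - {Min Z}" for z
    using step_pos[OF that] dom[of z] by (simp add: d_def)
  show "(\<integral>\<omega>. g (Y \<omega>) \<partial>M) \<le> (\<integral>\<omega>. g (X \<omega>) \<partial>M)"
    using sum_nonneg[of "Z - {Min Z}" d] d_nonneg diff by simp
  assume "\<exists>t. prob {\<omega>\<in>space M. t \<le> Y \<omega>} < prob {\<omega>\<in>space M. t \<le> X \<omega>}"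
  then obtain t where "prob {\<omega>\<in>space M. t \<le> Y \<omega>} < prob {\<omega>\<in>space M. t \<le> X \<omega>}" ..
  then obtain z where z: "z \<in> Z - {Min Z}"
    "prob {\<omega>\<in>space M. z \<le> Y \<omega>} < prob {\<omega>\<in>space M. z \<le> X \<omega>}"
    using stoch_dom_strict_witness[OF X Y] unfolding Z_def by blast
  have "0 < d z" using step_pos[OF z(1)] z(2) by (simp add: d_def)
  then have "0 < (\<Sum>z\<in>Z - {Min Z}. d z)"
    using fin z(1) d_nonneg by (intro sum_pos2) auto
  then show "(\<integral>\<omega>. g (Y \<omega>) \<partial>M) < (\<integral>\<omega>. g (X \<omega>) \<partial>M)" using diff by simp
qed

lemma E_beta_add_const:
  assumes "X \<in> B0 M" "\<beta> > -1"
  shows "E_beta M \<beta> (\<lambda>\<omega>. X \<omega> + m) = E_beta M \<beta> X + m"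
  using E_beta_root[OF assms] E_beta_eq_iff[OF B0_add[OF assms(1) B0_const] assms(2)] by simp

lemma E_beta_scale:
  assumes "X \<in> B0 M" "\<beta> > -1" "c \<ge> 0"
  shows "E_beta M \<beta> (\<lambda>\<omega>. c * X \<omega>) = c * E_beta M \<beta> X"
proof -
  have "(\<integral>\<omega>. expectile_ident \<beta> (c * X \<omega> - c * E_beta M \<beta> X) \<partial>M)
      = c * (\<integral>\<omega>. expectile_ident \<beta> (X \<omega> - E_beta M \<beta> X) \<partial>M)"
    using expectile_ident_scale[OF \<open>c \<ge> 0\<close>] by (simp add: right_diff_distrib[symmetric])
  then show ?thesis
    using E_beta_root[OF assms(1,2)] E_beta_eq_iff[OF B0_mult[OF B0_const assms(1)] assms(2)] by simp
qed

lemma E_beta_concordant_add: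
  assumes X: "X \<in> B0 M" and Y: "Y \<in> B0 M" and \<beta>: "\<beta> > -1"
    and eq: "{\<omega>\<in>space M. X \<omega> < E_beta M \<beta> X} = {\<omega>\<in>space M. Y \<omega> < E_beta M \<beta> Y}"
  shows "E_beta M \<beta> (\<lambda>\<omega>. X \<omega> + Y \<omega>) = E_beta M \<beta> X + E_beta M \<beta> Y"
proof -
  define v w where "v = E_beta M \<beta> X" and "w = E_beta M \<beta> Y"
  have "(\<integral>\<omega>. expectile_ident \<beta> (X \<omega> + Y \<omega> - (v + w)) \<partial>M)
      = (\<integral>\<omega>. expectile_ident \<beta> (X \<omega> - v) + expectile_ident \<beta> (Y \<omega> - w) \<partial>M)"
  proof (rule Bochner_Integration.integral_cong[OF refl])
    fix \<omega> assume "\<omega> \<in> space M"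
    then have "X \<omega> - v < 0 \<longleftrightarrow> Y \<omega> - w < 0" using eq by (auto simp: v_def w_def)
    then show "expectile_ident \<beta> (X \<omega> + Y \<omega> - (v + w)) = expectile_ident \<beta> (X \<omega> - v) + expectile_ident \<beta> (Y \<omega> - w)"
      by (metis expectile_ident_add add_diff_add)
  qed
  also have "\<dots> = (\<integral>\<omega>. expectile_ident \<beta> (X \<omega> - v) \<partial>M) + (\<integral>\<omega>. expectile_ident \<beta> (Y \<omega> - w) \<partial>M)"
    by (rule Bochner_Integration.integral_add[OF B0_integrable[OF X] B0_integrable[OF Y]])
  also have "\<dots> = 0"
    using E_beta_root[OF X \<beta>] E_beta_root[OF Y \<beta>] by (simp add: v_def w_def)
  finally show ?thesis using E_beta_eq_iff[OF B0_add[OF X Y] \<beta>] by (simp add: v_def w_def)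
qed

lemma E_beta_stoch_dom_mono:
  assumes X: "X \<in> B0 M" and Y: "Y \<in> B0 M" and \<beta>: "\<beta> > -1"
    and dom: "\<And>t. prob {\<omega>\<in>space M. t \<le> Y \<omega>} \<le> prob {\<omega>\<in>space M. t \<le> X \<omega>}"
  shows "E_beta M \<beta> Y \<le> E_beta M \<beta> X"
    and "(\<exists>t. prob {\<omega>\<in>space M. t \<le> Y \<omega>} < prob {\<omega>\<in>space M. t \<le> X \<omega>}) \<Longrightarrow>
      E_beta M \<beta> Y < E_beta M \<beta> X"
proof -
  define v where "v = E_beta M \<beta> Y"
  let ?F = "\<lambda>V u. \<integral>\<omega>. expectile_ident \<beta> (V \<omega> - u) \<partial>M"
  have g: "strict_mono (\<lambda>x. expectile_ident \<beta> (x - v))"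
    using expectile_ident_strict_mono[OF \<beta>] by (simp add: strict_mono_def)
  have root: "?F Y v = 0" "?F X (E_beta M \<beta> X) = 0"
    using E_beta_root[OF Y \<beta>] E_beta_root[OF X \<beta>] by (simp_all add: v_def)
  have antimono: "?F X u < ?F X u'" if "u' < u" for u u'
    using integral_expectile_ident_strict_antimono[OF X \<beta> that] .
  have "\<not> E_beta M \<beta> X < v"
    using integral_stoch_dom_mono(1)[OF X Y g dom] root antimono[of "E_beta M \<beta> X" v] by linarith
  then show "E_beta M \<beta> Y \<le> E_beta M \<beta> X" by (simp add: v_def)
  assume "\<exists>t. prob {\<omega>\<in>space M. t \<le> Y \<omega>} < prob {\<omega>\<in>space M. t \<le> X \<omega>}"
  note strict = integral_stoch_dom_mono(2)[OF X Y g dom this]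
  have "\<not> E_beta M \<beta> X < v" and "E_beta M \<beta> X \<noteq> v"
    using strict root antimono[of "E_beta M \<beta> X" v] by auto
  then show "E_beta M \<beta> Y < E_beta M \<beta> X" by (simp add: v_def)
qed


lemma E_beta_satisfies_axioms:
  assumes \<beta>: "\<beta> > -1" and I: "\<forall>X\<in>B0 M. I X = E_beta M \<beta> X"
  shows "strongly_monotone M I \<and> constant_additive M I \<and> positively_homogeneous M I \<and>
    concordant_additive M I"
  unfolding strongly_monotone_def constant_additive_def positively_homogeneous_def
    concordant_additive_def
proof (intro conjI ballI allI impI)
  fix X Y assume X: "X \<in> B0 M" and Y: "Y \<in> B0 M"
  note IX = I[rule_format, OF X] and IY = I[rule_format, OF Y]
  show "I (\<lambda>\<omega>. X \<omega> + m) = I X + m" for m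
    using I E_beta_add_const[OF X \<beta>] B0_add[OF X B0_const] IX by simp
  show "I (\<lambda>\<omega>. c * X \<omega>) = c * I X" if "c \<ge> 0" for c
    using I E_beta_scale[OF X \<beta> that] B0_mult[OF B0_const X] IX by simp
  assume dom: "\<forall>t. prob {\<omega>\<in>space M. t \<le> X \<omega>} \<ge> prob {\<omega>\<in>space M. t \<le> Y \<omega>}"
  then show "I X \<ge> I Y"
    using E_beta_stoch_dom_mono(1)[OF X Y \<beta>] IX IY by simp
  assume "\<exists>t. prob {\<omega>\<in>space M. t \<le> X \<omega>} > prob {\<omega>\<in>space M. t \<le> Y \<omega>}"
  then show "I X > I Y"
    using E_beta_stoch_dom_mono(2)[OF X Y \<beta>] dom IX IY by simp
next
  fix X Y assume X: "X \<in> B0 M" and Y: "Y \<in> B0 M"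
    and "{\<omega>\<in>space M. X \<omega> < I X} = {\<omega>\<in>space M. Y \<omega> < I Y}"
  then show "I (\<lambda>\<omega>. X \<omega> + Y \<omega>) = I X + I Y"
    using I E_beta_concordant_add[OF X Y \<beta>] B0_add[OF X Y] by simp
qed

end


context prob_space
begin

lemma nonatomic_small_subset:
  assumes na: "nonatomic M" and S: "S \<in> events" "prob S > 0" and "\<epsilon> > 0"
  shows "\<exists>T\<in>events. T \<subseteq> S \<and> 0 < prob T \<and> prob T \<le> \<epsilon>"
proof -
  have halving: "\<exists>T\<in>events. T \<subseteq> S \<and> 0 < prob T \<and> prob T \<le> prob S / 2 ^ n" for n
  proof (induction n)
    case 0
    then show ?case using S by (intro bexI[of _ S]) auto
  next
    case (Suc n)
    then obtain T where T: "T \<in> events" "T \<subseteq> S" "0 < prob T" "prob T \<le> prob S / 2 ^ n" by blast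
    obtain B where B: "B \<in> events" "B \<subseteq> T" "0 < prob B" "prob B < prob T"
      using na T unfolding nonatomic_def by blast
    show ?case
    proof (cases "prob B \<le> prob T / 2")
      case True
      then show ?thesis using B T by (intro bexI[of _ B]) auto
    next
      case False
      have "prob (T - B) = prob T - prob B" using T B by (simp add: finite_measure_Diff)
      then show ?thesis using B T False by (intro bexI[of _ "T - B"]) auto
    qed
  qed
  obtain n :: nat where "prob S / \<epsilon> < 2 ^ n"
    using real_arch_pow[of 2 "prob S / \<epsilon>"] by auto
  then have "prob S / 2 ^ n \<le> \<epsilon>" using \<open>\<epsilon> > 0\<close> by (simp add: field_simps)
  moreover obtain T where "T \<in> events" "T \<subseteq> S" "0 < prob T" "prob T \<le> prob S / 2 ^ n"
    using halving[of n] by blast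
  ultimately show ?thesis by (intro bexI[of _ T]) auto
qed

lemma ex_prob_ge_half_sup:
  assumes "\<F> \<noteq> {}"
  shows "\<exists>C\<in>\<F>. \<forall>C'\<in>\<F>. prob C' \<le> 2 * prob C"
proof -
  let ?P = "prob ` \<F>"
  have bdd: "bdd_above ?P" by (intro bdd_aboveI[of _ 1]) auto
  have le_Sup: "prob C' \<le> Sup ?P" if "C' \<in> \<F>" for C'
    using that bdd by (intro cSup_upper) auto
  show ?thesis
  proof (cases "Sup ?P \<le> 0")
    case True
    obtain C where "C \<in> \<F>" using assms by blast
    have "prob C' \<le> 2 * prob C" if "C' \<in> \<F>" for C'
      using True le_Sup[OF that] measure_nonneg[of M C] by linarith
    then show ?thesis using \<open>C \<in> \<F>\<close> by blast
  next
    case False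
    then have "Sup ?P / 2 < Sup ?P" by simp
    then obtain C where C: "C \<in> \<F>" "Sup ?P / 2 < prob C"
      using less_cSup_iff[OF _ bdd] assms by blast
    have "prob C' \<le> 2 * prob C" if "C' \<in> \<F>" for C'
      using le_Sup[OF that] C(2) by linarith
    then show ?thesis using C(1) by blast
  qed
qed

text \<open>Sierpi\'nski's theorem, by a greedy exhaustion: each step adds a largest admissible set up
  to a factor 2, so the added probabilities tend to 0, and a remaining gap would leave room for a
  set of positive probability that is eventually too large to have been passed over.\<close>

lemma nonatomic_subset_prob:
  assumes na: "nonatomic M" and S: "S \<in> events" and s: "0 \<le> s" "s \<le> prob S"
  shows "\<exists>T\<in>events. T \<subseteq> S \<and> prob T = s"
proof -
  define admissible where "admissible T = {C \<in> events. C \<subseteq> S - T \<and> prob C \<le> s - prob T}" for T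
  define step where "step T = (SOME C. C \<in> admissible T \<and> (\<forall>C'\<in>admissible T. prob C' \<le> 2 * prob C))" for T
  define Ts where "Ts n = ((\<lambda>T. T \<union> step T) ^^ n) {}" for n
  have Ts_Suc: "Ts (Suc n) = Ts n \<union> step (Ts n)" for n by (simp add: Ts_def)
  have step: "step T \<in> admissible T" "\<forall>C'\<in>admissible T. prob C' \<le> 2 * prob (step T)"
    if "prob T \<le> s" for T
  proof -
    have "{} \<in> admissible T" using that by (simp add: admissible_def)
    then have "\<exists>C. C \<in> admissible T \<and> (\<forall>C'\<in>admissible T. prob C' \<le> 2 * prob C)"
      using ex_prob_ge_half_sup[of "admissible T"] by blast
    from someI_ex[OF this]
    show "step T \<in> admissible T" "\<forall>C'\<in>admissible T. prob C' \<le> 2 * prob (step T)"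
      unfolding step_def by blast+
  qed
  have inv: "Ts n \<in> events \<and> Ts n \<subseteq> S \<and> prob (Ts n) \<le> s" for n
  proof (induction n)
    case 0
    then show ?case using s by (simp add: Ts_def)
  next
    case (Suc n)
    then have "step (Ts n) \<in> admissible (Ts n)" by (intro step) auto
    moreover from this have "prob (Ts (Suc n)) = prob (Ts n) + prob (step (Ts n))"
      using Suc unfolding Ts_Suc by (intro finite_measure_Union) (auto simp: admissible_def)
    ultimately show ?case using Suc by (auto simp: Ts_Suc admissible_def)
  qed
  have prob_Suc: "prob (Ts (Suc n)) = prob (Ts n) + prob (step (Ts n))" for n
    using step(1)[of "Ts n"] inv[of n] unfolding Ts_Suc
    by (intro finite_measure_Union) (auto simp: admissible_def)
  define T where "T = (\<Union>n. Ts n)"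
  have T: "T \<in> events" "T \<subseteq> S" using inv by (auto simp: T_def)
  have lim: "(\<lambda>n. prob (Ts n)) \<longlonglongrightarrow> prob T"
    unfolding T_def using inv by (intro finite_Lim_measure_incseq incseq_SucI) (auto simp: Ts_Suc)
  then have "prob T \<le> s" using inv by (intro LIMSEQ_le_const2) auto
  have "(\<lambda>n. prob (Ts (Suc n)) - prob (Ts n)) \<longlonglongrightarrow> prob T - prob T"
    by (intro tendsto_diff lim LIMSEQ_Suc[OF lim])
  then have step_to_0: "(\<lambda>n. prob (step (Ts n))) \<longlonglongrightarrow> 0" using prob_Suc by simp
  have "prob T = s"
  proof (rule ccontr)
    assume "prob T \<noteq> s"
    with \<open>prob T \<le> s\<close> have "0 < prob (S - T)" using S T s by (simp add: finite_measure_Diff)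
    then obtain C where C: "C \<in> events" "C \<subseteq> S - T" "0 < prob C" "prob C \<le> s - prob T"
      using nonatomic_small_subset[OF na _ _, of "S - T" "s - prob T"] S T \<open>prob T \<le> s\<close> \<open>prob T \<noteq> s\<close>
      by auto
    have "C \<in> admissible (Ts n)" for n
    proof -
      have "Ts n \<subseteq> T" by (auto simp: T_def)
      then show ?thesis
        using C T finite_measure_mono[of "Ts n" T] by (auto simp: admissible_def)
    qed
    then have big: "prob C \<le> 2 * prob (step (Ts n))" for n using step(2) inv by blast
    obtain n where "prob (step (Ts n)) < prob C / 2"
      using order_tendstoD(2)[OF step_to_0, of "prob C / 2"] C(3) by (auto dest: eventually_happens)
    then show False using big[of n] by linarith
  qed
  then show ?thesis using T by blast
qed

lemma additive_mult_of_nat: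
  fixes \<psi> :: "real \<Rightarrow> real"
  assumes add: "\<And>a b. 0 < a \<Longrightarrow> 0 < b \<Longrightarrow> a + b \<le> \<sigma> \<Longrightarrow> \<psi> (a + b) = \<psi> a + \<psi> b"
    and zero: "\<psi> 0 = 0" and x: "0 < x" "real k * x \<le> \<sigma>"
  shows "\<psi> (real k * x) = real k * \<psi> x"
  using x(2)
proof (induction k)
  case 0
  then show ?case using zero by simp
next
  case (Suc k)
  show ?case
  proof (cases "k = 0")
    case True
    then show ?thesis by simp
  next
    case False
    have "real k * x \<le> real (Suc k) * x" using x(1) by (intro mult_right_mono) auto
    then have IH: "\<psi> (real k * x) = real k * \<psi> x" using Suc by simp
    have "\<psi> (real (Suc k) * x) = \<psi> (real k * x + x)" by (simp add: distrib_right add.commute)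
    also have "\<dots> = \<psi> (real k * x) + \<psi> x"
      using Suc.prems False x(1) by (intro add) (auto simp: distrib_right)
    finally show ?thesis using IH by (simp add: distrib_right)
  qed
qed

lemma monotone_additive_linear:
  fixes \<psi> :: "real \<Rightarrow> real"
  assumes sig: "\<sigma> > 0"
    and mono: "\<And>a b. 0 \<le> a \<Longrightarrow> a \<le> b \<Longrightarrow> b \<le> \<sigma> \<Longrightarrow> \<psi> a \<le> \<psi> b"
    and add: "\<And>a b. 0 < a \<Longrightarrow> 0 < b \<Longrightarrow> a + b \<le> \<sigma> \<Longrightarrow> \<psi> (a + b) = \<psi> a + \<psi> b"
    and zero: "\<psi> 0 = 0"
    and s: "0 \<le> s" "s \<le> \<sigma>"
  shows "\<psi> s = \<psi> \<sigma> * s / \<sigma>"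
proof -
  have mult: "\<psi> (real k * x) = real k * \<psi> x" if "0 < x" "real k * x \<le> \<sigma>" for k x
    using add zero that by (rule additive_mult_of_nat)
  define c where "c = \<psi> \<sigma>"
  have c0: "0 \<le> c" using mono[of 0 \<sigma>] sig zero by (simp add: c_def)
  have bound: "\<bar>\<psi> s - c * s / \<sigma>\<bar> \<le> c / real N" if N: "N \<ge> 1" for N :: nat
  proof -
    define x where "x = \<sigma> / real N"
    have x0: "x > 0" using sig N by (simp add: x_def)
    have Nx: "real N * x = \<sigma>" using N by (simp add: x_def)
    have px: "\<psi> x = c / real N"
      using mult[OF x0, of N] Nx N by (simp add: c_def field_simps)
    define k where "k = nat \<lfloor>s / x\<rfloor>"
    have k1: "real k \<le> s / x" using s x0 by (simp add: k_def)
    have k2: "s / x < real k + 1" using s x0 by (simp add: k_def)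
    have kx1: "real k * x \<le> s" using k1 x0 by (simp add: field_simps)
    have kx2: "s < (real k + 1) * x" using k2 x0 by (simp add: field_simps)
    show ?thesis
    proof (cases "k < N")
      case True
      then have kN: "real k + 1 \<le> real N" by simp
      have le1: "(real k + 1) * x \<le> \<sigma>" using kN x0 Nx by (metis mult_right_mono less_imp_le)
      have lo: "\<psi> (real k * x) \<le> \<psi> s" using kx1 x0 s by (intro mono) auto
      have hi: "\<psi> s \<le> \<psi> ((real k + 1) * x)" using kx2 le1 s by (intro mono) auto
      have e1: "\<psi> (real k * x) = real k * c / real N"
        using mult[OF x0, of k] kx1 s px by simp
      have e2: "\<psi> ((real k + 1) * x) = (real k + 1) * c / real N"
        using mult[OF x0, of "Suc k"] le1 px by (simp add: add.commute)
      have q1: "real k * c / real N \<le> c * s / \<sigma>"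
      proof -
        have "real k / real N \<le> s / \<sigma>" using kx1 x0 sig N by (simp add: x_def field_simps)
        then have "c * (real k / real N) \<le> c * (s / \<sigma>)" using c0 by (rule mult_left_mono)
        then show ?thesis by (simp add: mult.commute)
      qed
      have q2: "c * s / \<sigma> \<le> (real k + 1) * c / real N"
      proof -
        have "s / \<sigma> \<le> (real k + 1) / real N" using kx2 x0 sig N by (simp add: x_def field_simps)
        then have "c * (s / \<sigma>) \<le> c * ((real k + 1) / real N)" using c0 by (rule mult_left_mono)
        then show ?thesis by (simp add: mult.commute)
      qed
      have "(real k + 1) * c / real N - real k * c / real N = c / real N"
        by (simp add: diff_divide_distrib[symmetric] algebra_simps)
      then show ?thesis using lo hi e1 e2 q1 q2 by (simp add: abs_le_iff)
    next
      case False
      then have "real N \<le> real k" by simp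
      then have "\<sigma> \<le> real k * x" using Nx x0 by (metis mult_right_mono less_imp_le)
      then have "s = \<sigma>" using kx1 s by simp
      then show ?thesis using sig c0 N by (simp add: c_def)
    qed
  qed
  have "(\<lambda>N. c / real (Suc N)) \<longlonglongrightarrow> 0"
    by (rule LIMSEQ_Suc[OF lim_const_over_n])
  moreover have "\<bar>\<psi> s - c * s / \<sigma>\<bar> \<le> c / real (Suc N)" for N
    by (rule bound) simp
  ultimately have "\<bar>\<psi> s - c * s / \<sigma>\<bar> \<le> 0"
    by (intro LIMSEQ_le_const) auto
  then show ?thesis by (simp add: c_def)
qed

end

context prob_space
begin

definition prob_monotone_additive :: "'a set \<Rightarrow> ('a set \<Rightarrow> real) \<Rightarrow> bool" where
  "prob_monotone_additive S \<phi> \<longleftrightarrow>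
    (\<forall>D\<in>events. \<forall>D'\<in>events. D \<subseteq> S \<longrightarrow> D' \<subseteq> S \<longrightarrow> prob D \<le> prob D' \<longrightarrow> \<phi> D \<le> \<phi> D') \<and>
    (\<forall>D\<in>events. \<forall>D'\<in>events. D \<subseteq> S \<longrightarrow> D' \<subseteq> S \<longrightarrow> D \<inter> D' = {} \<longrightarrow>
       0 < prob D \<longrightarrow> 0 < prob D' \<longrightarrow> \<phi> (D \<union> D') = \<phi> D + \<phi> D') \<and>
    (\<forall>D\<in>events. D \<subseteq> S \<longrightarrow> prob D = 0 \<longrightarrow> \<phi> D = 0)"

lemma prob_monotone_additiveI:
  assumes "\<And>D D'. D \<in> events \<Longrightarrow> D \<subseteq> S \<Longrightarrow> D' \<in> events \<Longrightarrow> D' \<subseteq> S \<Longrightarrow> prob D \<le> prob D' \<Longrightarrow>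
      \<phi> D \<le> \<phi> D'"
    and "\<And>D D'. D \<in> events \<Longrightarrow> D \<subseteq> S \<Longrightarrow> D' \<in> events \<Longrightarrow> D' \<subseteq> S \<Longrightarrow> D \<inter> D' = {} \<Longrightarrow>
      0 < prob D \<Longrightarrow> 0 < prob D' \<Longrightarrow> \<phi> (D \<union> D') = \<phi> D + \<phi> D'"
    and "\<And>D. D \<in> events \<Longrightarrow> D \<subseteq> S \<Longrightarrow> prob D = 0 \<Longrightarrow> \<phi> D = 0"
  shows "prob_monotone_additive S \<phi>"
  using assms unfolding prob_monotone_additive_def by blast

lemma
  assumes "prob_monotone_additive S \<phi>"
  shows prob_monotone_additive_mono: "D \<in> events \<Longrightarrow> D \<subseteq> S \<Longrightarrow> D' \<in> events \<Longrightarrow> D' \<subseteq> S \<Longrightarrow>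
      prob D \<le> prob D' \<Longrightarrow> \<phi> D \<le> \<phi> D'"
    and prob_monotone_additive_add: "D \<in> events \<Longrightarrow> D \<subseteq> S \<Longrightarrow> D' \<in> events \<Longrightarrow> D' \<subseteq> S \<Longrightarrow>
      D \<inter> D' = {} \<Longrightarrow> 0 < prob D \<Longrightarrow> 0 < prob D' \<Longrightarrow> \<phi> (D \<union> D') = \<phi> D + \<phi> D'"
    and prob_monotone_additive_null: "D \<in> events \<Longrightarrow> D \<subseteq> S \<Longrightarrow> prob D = 0 \<Longrightarrow> \<phi> D = 0"
  using assms unfolding prob_monotone_additive_def by blast+

lemma nonatomic_prob_monotone_additive_proportional:
  assumes na: "nonatomic M" and S: "S \<in> events" and Spos: "prob S > 0"
    and \<phi>: "prob_monotone_additive S \<phi>" and D: "D \<in> events" "D \<subseteq> S"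
  shows "\<phi> D = \<phi> S * prob D / prob S"
proof -
  note mono = prob_monotone_additive_mono[OF \<phi>] and add = prob_monotone_additive_add[OF \<phi>]
    and null = prob_monotone_additive_null[OF \<phi>]
  define R where "R s = (SOME T. T \<in> events \<and> T \<subseteq> S \<and> prob T = s)" for s
  have R: "R s \<in> events \<and> R s \<subseteq> S \<and> prob (R s) = s" if hs: "0 \<le> s" "s \<le> prob S" for s
  proof -
    obtain T where T: "T \<in> events \<and> T \<subseteq> S \<and> prob T = s" using nonatomic_subset_prob[OF na S hs] by blast
    then show ?thesis unfolding R_def by (rule someI)
  qed
  define \<psi> where "\<psi> s = \<phi> (R s)" for s
  have \<psi>eq: "\<psi> (prob E) = \<phi> E" if "E \<in> events" "E \<subseteq> S" for E
  proof -
    have p: "0 \<le> prob E" "prob E \<le> prob S" using that S by (auto intro: finite_measure_mono)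
    have r: "R (prob E) \<in> events" "R (prob E) \<subseteq> S" "prob (R (prob E)) = prob E" using R[OF p] by auto
    have "\<phi> E \<le> \<phi> (R (prob E))" by (rule mono) (use r that in auto)
    moreover have "\<phi> (R (prob E)) \<le> \<phi> E" by (rule mono) (use r that in auto)
    ultimately show ?thesis unfolding \<psi>_def by (rule antisym[rotated])
  qed
  have pmono: "\<psi> a \<le> \<psi> b" if "0 \<le> a" "a \<le> b" "b \<le> prob S" for a b
  proof -
    have ra: "R a \<in> events" "R a \<subseteq> S" "prob (R a) = a" using R[of a] that by auto
    have rb: "R b \<in> events" "R b \<subseteq> S" "prob (R b) = b" using R[of b] that by auto
    show ?thesis unfolding \<psi>_def by (rule mono) (use ra rb that in auto)
  qed
  have padd: "\<psi> (a + b) = \<psi> a + \<psi> b" if ab: "0 < a" "0 < b" "a + b \<le> prob S" for a b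
  proof -
    have T: "R (a + b) \<in> events" "R (a + b) \<subseteq> S" "prob (R (a + b)) = a + b" using R[of "a + b"] ab by auto
    obtain T1 where T1: "T1 \<in> events" "T1 \<subseteq> R (a + b)" "prob T1 = a"
      using nonatomic_subset_prob[OF na T(1), of a] T ab by auto
    have T2p: "prob (R (a + b) - T1) = b" using T T1 by (simp add: finite_measure_Diff)
    have un: "T1 \<union> (R (a + b) - T1) = R (a + b)" using T1 by auto
    have "\<psi> (a + b) = \<phi> (T1 \<union> (R (a + b) - T1))" using un by (simp add: \<psi>_def)
    also have "\<dots> = \<phi> T1 + \<phi> (R (a + b) - T1)"
      using T T1 T2p ab by (intro add) auto
    also have "\<dots> = \<psi> a + \<psi> b"
    proof -
      have e1: "\<phi> T1 = \<psi> a" using \<psi>eq[of T1] T T1 by auto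
      have sub: "R (a + b) - T1 \<subseteq> S" using T by auto
      have e2: "\<phi> (R (a + b) - T1) = \<psi> b" using \<psi>eq[of "R (a + b) - T1"] T(1) T1(1) sub T2p by auto
      show ?thesis using e1 e2 by simp
    qed
    finally show ?thesis .
  qed
  have pzero: "\<psi> 0 = 0"
  proof -
    have r: "R 0 \<in> events" "R 0 \<subseteq> S" "prob (R 0) = 0" using R[of 0] Spos by auto
    show ?thesis unfolding \<psi>_def by (rule null) (use r in auto)
  qed
  have "\<psi> (prob D) = \<psi> (prob S) * prob D / prob S"
    using D S by (intro monotone_additive_linear[OF Spos pmono padd pzero]) (auto intro: finite_measure_mono)
  then show ?thesis using \<psi>eq[OF D] \<psi>eq[OF S] by simp
qed

end

lemma partition_on_sigma_sets_Union:
  assumes P: "partition_on \<Omega> Q" and D: "D \<in> sigma_sets \<Omega> Q"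
  shows "\<exists>F\<subseteq>Q. D = \<Union>F"
  using D
proof (induction rule: sigma_sets.induct)
  case (Basic a)
  then show ?case by (intro exI[of _ "{a}"]) auto
next
  case Empty
  then show ?case by (intro exI[of _ "{}"]) auto
next
  case (Compl a)
  then obtain F where F: "F \<subseteq> Q" "a = \<Union>F" by blast
  have cover: "\<Union>Q = \<Omega>" and disj: "\<And>B B'. B \<in> Q \<Longrightarrow> B' \<in> Q \<Longrightarrow> B \<noteq> B' \<Longrightarrow> B \<inter> B' = {}"
    using P unfolding partition_on_def disjoint_def by auto
  have "\<Omega> - a = \<Union>(Q - F)"
  proof (intro equalityI subsetI)
    fix x assume "x \<in> \<Omega> - a"
    then show "x \<in> \<Union>(Q - F)" using cover F by blast
  next
    fix x assume "x \<in> \<Union>(Q - F)"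
    then obtain B where B: "B \<in> Q" "B \<notin> F" "x \<in> B" by blast
    have "x \<notin> B'" if "B' \<in> F" for B'
      using disj[of B B'] B that F(1) by blast
    then show "x \<in> \<Omega> - a" using B cover F(2) by blast
  qed
  then show ?case by (intro exI[of _ "Q - F"]) auto
next
  case (Union a)
  then obtain F where "\<And>i. F i \<subseteq> Q \<and> a i = \<Union>(F i)" by metis
  then show ?case by (intro exI[of _ "\<Union>i. F i"]) auto
qed

context prob_space
begin

definition uniform_partition :: "'a set set \<Rightarrow> bool" where
  "uniform_partition Q \<longleftrightarrow> finite Q \<and> partition_on (space M) Q \<and> sets M = sigma_sets (space M) Q \<and>
      (\<forall>B\<in>Q. prob B = 1 / real (card Q))"

lemma finite_uniform_iff: "finite_uniform M \<longleftrightarrow> (\<exists>Q. uniform_partition Q)"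
  by (simp add: finite_uniform_def uniform_partition_def)

lemma uniform_partition_card_pos: "uniform_partition Q \<Longrightarrow> 0 < card Q"
  using not_empty by (auto simp: uniform_partition_def partition_on_def card_gt_0_iff)

lemma uniform_partition_event_iff:
  assumes Q: "uniform_partition Q"
  shows "D \<in> events \<longleftrightarrow> (\<exists>F\<subseteq>Q. D = \<Union>F)"
proof
  show "D \<in> events \<Longrightarrow> \<exists>F\<subseteq>Q. D = \<Union>F"
    using Q partition_on_sigma_sets_Union[of "space M" Q D] by (simp add: uniform_partition_def)
next
  assume "\<exists>F\<subseteq>Q. D = \<Union>F"
  then obtain F where F: "F \<subseteq> Q" "D = \<Union>F" by blast
  have "Q \<subseteq> events" using Q sigma_sets.Basic[of _ Q "space M"] by (auto simp: uniform_partition_def)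
  moreover have "finite F" using Q F(1) by (auto simp: uniform_partition_def intro: finite_subset)
  ultimately show "D \<in> events" unfolding F(2) using F(1) by (intro sets.finite_Union) auto
qed

lemma uniform_partition_prob_Union:
  assumes Q: "uniform_partition Q" and F: "F \<subseteq> Q"
  shows "prob (\<Union>F) = real (card F) / real (card Q)"
proof -
  have fin: "finite F" using Q F by (auto simp: uniform_partition_def intro: finite_subset)
  have ev: "F \<subseteq> events" using Q F uniform_partition_event_iff[OF Q] by blast
  have "disjoint Q" using Q by (simp add: uniform_partition_def partition_on_def)
  then have "disjoint_family_on id F" using F by (auto simp: disjoint_family_on_def disjoint_def)
  then have "prob (\<Union>B\<in>F. id B) = (\<Sum>B\<in>F. prob (id B))"
    using fin ev by (intro measure_finite_Union) (auto simp: emeasure_eq_measure id_def)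
  also have "\<dots> = (\<Sum>B\<in>F. 1 / real (card Q))"
    using Q F by (intro sum.cong) (auto simp: uniform_partition_def)
  finally show ?thesis by simp
qed

lemma uniform_prob_monotone_additive_proportional:
  assumes Q: "uniform_partition Q" and S: "S \<in> events" and Spos: "prob S > 0"
    and \<phi>: "prob_monotone_additive S \<phi>" and D: "D \<in> events" "D \<subseteq> S"
  shows "\<phi> D = \<phi> S * prob D / prob S"
proof -
  have card_pos: "card Q > 0" by (rule uniform_partition_card_pos[OF Q])
  have finQ: "finite Q" and disj: "disjoint Q" and nonempty: "{} \<notin> Q"
    using Q by (auto simp: uniform_partition_def partition_on_def)
  have disjQ: "B \<inter> B' = {}" if "B \<in> Q" "B' \<in> Q" "B \<noteq> B'" for B B'
    using disjointD[OF disj that] .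
  have block: "B \<in> events" "prob B = 1 / real (card Q)" if "B \<in> Q" for B
    using Q that uniform_partition_event_iff[OF Q, of B] by (auto simp: uniform_partition_def)
  obtain FS where FS: "FS \<subseteq> Q" "S = \<Union>FS" using uniform_partition_event_iff[OF Q, THEN iffD1, OF S] by blast
  have "FS \<noteq> {}" using FS(2) Spos by auto
  then obtain B1 where B1: "B1 \<in> FS" by blast
  define c where "c = \<phi> B1"
  have equal_blocks: "\<phi> B = c" if "B \<in> FS" for B
  proof -
    have "B \<in> events" "B \<subseteq> S" "B1 \<in> events" "B1 \<subseteq> S" "prob B = prob B1"
      using that B1 FS block[OF subsetD[OF FS(1) that]] block[OF subsetD[OF FS(1) B1]] by auto
    then show ?thesis
      unfolding c_def by (metis antisym order_refl prob_monotone_additive_mono[OF \<phi>])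
  qed
  have union: "\<phi> (\<Union>F) = real (card F) * c" if "F \<subseteq> FS" for F
  proof -
    have "finite F" using finQ that FS(1) by (auto intro: finite_subset)
    then show ?thesis using that
    proof (induction F rule: finite_induct)
      case empty
      then show ?case using prob_monotone_additive_null[OF \<phi>] by simp
    next
      case (insert B F)
      show ?case
      proof (cases "F = {}")
        case True
        then show ?thesis using insert equal_blocks by simp
      next
        case False
        have "B \<inter> B' = {}" if "B' \<in> F" for B'
          using insert.hyps(2) insert.prems FS(1) that by (intro disjQ) auto
        then have "B \<inter> \<Union>F = {}" by blast
        moreover have "F \<subseteq> Q" using insert.prems FS(1) by blast
        then have "0 < prob (\<Union>F)"
          using uniform_partition_prob_Union[OF Q] insert.hyps(1) False card_pos
          by (simp add: card_gt_0_iff)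
        moreover have "\<Union>F \<in> events"
          using uniform_partition_event_iff[OF Q, of "\<Union>F"] insert.prems FS(1) by blast
        moreover have "B \<in> events" "0 < prob B" using block[of B] insert.prems FS(1) card_pos by auto
        ultimately have "\<phi> (B \<union> \<Union>F) = \<phi> B + \<phi> (\<Union>F)"
          using insert.prems FS by (intro prob_monotone_additive_add[OF \<phi>]) auto
        then show ?thesis using insert equal_blocks by (simp add: algebra_simps)
      qed
    qed
  qed
  obtain FD where FD: "FD \<subseteq> Q" "D = \<Union>FD" using uniform_partition_event_iff[OF Q, THEN iffD1, OF D(1)] by blast
  have "FD \<subseteq> FS"
  proof
    fix B assume B: "B \<in> FD"
    then have "B \<in> Q" using FD(1) by blast
    then obtain x where "x \<in> B" using nonempty by (metis ex_in_conv)
    moreover have "B \<subseteq> S" using B FD(2) D(2) by blast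
    ultimately obtain B' where B': "B' \<in> FS" "x \<in> B'" using FS(2) by blast
    then have "B = B'" using disjQ[of B B'] \<open>B \<in> Q\<close> FS(1) \<open>x \<in> B\<close> by blast
    then show "B \<in> FS" using B' by simp
  qed
  have "finite FS" using finQ FS(1) by (rule finite_subset[rotated])
  then have "card FS > 0" using \<open>FS \<noteq> {}\<close> by (simp add: card_gt_0_iff)
  have "\<phi> D = real (card FD) * c" using union \<open>FD \<subseteq> FS\<close> FD(2) by simp
  moreover have "\<phi> S = real (card FS) * c" using union FS(2) by simp
  moreover have "prob D = real (card FD) / real (card Q)"
    using uniform_partition_prob_Union[OF Q FD(1)] FD(2) by simp
  moreover have "prob S = real (card FS) / real (card Q)"
    using uniform_partition_prob_Union[OF Q FS(1)] FS(2) by simp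
  ultimately show ?thesis using card_pos \<open>card FS > 0\<close> by simp
qed

lemma adequate_prob_monotone_additive_proportional:
  assumes "adequate M" "S \<in> events" "prob S > 0" "prob_monotone_additive S \<phi>" "D \<in> events" "D \<subseteq> S"
  shows "\<phi> D = \<phi> S * prob D / prob S"
proof (cases "nonatomic M")
  case True
  then show ?thesis by (rule nonatomic_prob_monotone_additive_proportional[OF _ assms(2-)])
next
  case False
  then obtain Q where "uniform_partition Q" using assms(1) by (auto simp: adequate_def finite_uniform_iff)
  then show ?thesis by (rule uniform_prob_monotone_additive_proportional[OF _ assms(2-)])
qed

lemma adequate_equal_prob_subset:
  assumes "adequate M" and S: "S \<in> events" and T: "T \<in> events" and le: "prob T \<le> prob S"
  shows "\<exists>S'\<in>events. S' \<subseteq> S \<and> prob S' = prob T"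
proof (cases "nonatomic M")
  case True
  show ?thesis using nonatomic_subset_prob[OF True S measure_nonneg le] .
next
  case False
  then obtain Q where Q: "uniform_partition Q" using assms(1) by (auto simp: adequate_def finite_uniform_iff)
  obtain FS where FS: "FS \<subseteq> Q" "S = \<Union>FS" using uniform_partition_event_iff[OF Q, THEN iffD1, OF S] by blast
  obtain FT where FT: "FT \<subseteq> Q" "T = \<Union>FT" using uniform_partition_event_iff[OF Q, THEN iffD1, OF T] by blast
  have "real (card FT) / real (card Q) \<le> real (card FS) / real (card Q)"
    using le uniform_partition_prob_Union[OF Q FS(1)] uniform_partition_prob_Union[OF Q FT(1)] FS FT
    by simp
  then have "card FT \<le> card FS"
    using uniform_partition_card_pos[OF Q] by (simp add: divide_le_cancel)
  then obtain F' where F': "F' \<subseteq> FS" "card F' = card FT"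
    by (metis obtain_subset_with_card_n)
  have "F' \<subseteq> Q" using F' FS by blast
  then have "\<Union>F' \<in> events" using uniform_partition_event_iff[OF Q, of "\<Union>F'"] by blast
  moreover have "prob (\<Union>F') = prob T"
    using uniform_partition_prob_Union[OF Q \<open>F' \<subseteq> Q\<close>] uniform_partition_prob_Union[OF Q FT(1)] F'(2) FT(2)
    by simp
  moreover have "\<Union>F' \<subseteq> S" using F'(1) FS(2) by auto
  ultimately show ?thesis by blast
qed

end


lemma (in prob_space) B0_null_atoms:
  assumes X: "X \<in> B0 M"
  defines "N \<equiv> {\<omega>\<in>space M. prob {\<omega>'\<in>space M. X \<omega>' = X \<omega>} = 0}"
  shows "N \<in> events" "prob N = 0"
proof -
  let ?V = "{x\<in>X ` space M. prob {\<omega>\<in>space M. X \<omega> = x} = 0}"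
  have N: "N = (\<Union>x\<in>?V. {\<omega>\<in>space M. X \<omega> = x})" by (auto simp: N_def)
  have fin: "finite ?V" using B0_finite_range[OF X] by simp
  then show "N \<in> events" unfolding N using B0_sets[OF X] by (intro sets.finite_UN) auto
  have "prob N \<le> (\<Sum>x\<in>?V. prob {\<omega>\<in>space M. X \<omega> = x})"
    unfolding N using fin B0_sets[OF X] by (intro finite_measure_subadditive_finite) auto
  then show "prob N = 0" using measure_nonneg[of M N] by simp
qed

lemma (in prob_space) B0_integral_pos:
  assumes X: "X \<in> B0 M" and nonneg: "\<And>\<omega>. \<omega> \<in> space M \<Longrightarrow> 0 \<le> X \<omega>"
    and pos: "0 < prob {\<omega>\<in>space M. 0 < X \<omega>}"
  shows "0 < integral\<^sup>L M X"
proof -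
  have int: "integrable M X" using B0_integrable[OF X, of "\<lambda>x. x"] by simp
  have "{\<omega>\<in>space M. \<not> X \<omega> = 0} = {\<omega>\<in>space M. 0 < X \<omega>}" using nonneg by force
  then have "\<not> (AE \<omega> in M. X \<omega> = 0)"
    using pos B0_sets[OF X] by (subst AE_iff_measurable) (auto simp: emeasure_eq_measure)
  then have "integral\<^sup>L M X \<noteq> 0"
    using integral_nonneg_eq_0_iff_AE[OF int] nonneg by auto
  moreover have "0 \<le> integral\<^sup>L M X" using nonneg by (intro integral_nonneg_AE AE_I2)
  ultimately show ?thesis by simp
qed

definition three_valued :: "real \<Rightarrow> real \<Rightarrow> real \<Rightarrow> 'a set \<Rightarrow> 'a set \<Rightarrow> 'a set \<Rightarrow> 'a \<Rightarrow> real" where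
  "three_valued a b c P1 P2 P3 \<omega> = a * indicator P1 \<omega> + b * indicator P2 \<omega> + c * indicator P3 \<omega>"

context prob_space
begin

definition partition3 :: "'a set \<Rightarrow> 'a set \<Rightarrow> 'a set \<Rightarrow> bool" where
  "partition3 P1 P2 P3 \<longleftrightarrow> P1 \<in> events \<and> P2 \<in> events \<and> P3 \<in> events \<and>
     P1 \<inter> P2 = {} \<and> P1 \<inter> P3 = {} \<and> P2 \<inter> P3 = {} \<and> P1 \<union> P2 \<union> P3 = space M"

lemma partition3_cases:
  assumes "partition3 P1 P2 P3" "\<omega> \<in> space M"
  obtains "\<omega> \<in> P1" | "\<omega> \<in> P2" | "\<omega> \<in> P3"
  using assms unfolding partition3_def by blast

lemma three_valued_B0: "partition3 P1 P2 P3 \<Longrightarrow> three_valued a b c P1 P2 P3 \<in> B0 M"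
  unfolding partition3_def three_valued_def[abs_def]
  by (intro B0_add B0_scaled_indicator) auto

lemma three_valued_eq:
  assumes "partition3 P1 P2 P3"
  shows "\<omega> \<in> P1 \<Longrightarrow> three_valued a b c P1 P2 P3 \<omega> = a"
    and "\<omega> \<in> P2 \<Longrightarrow> three_valued a b c P1 P2 P3 \<omega> = b"
    and "\<omega> \<in> P3 \<Longrightarrow> three_valued a b c P1 P2 P3 \<omega> = c"
  using assms unfolding partition3_def three_valued_def by (auto simp: indicator_def)

lemma prob_three_valued_ge:
  assumes P: "partition3 P1 P2 P3"
  shows "prob {\<omega>\<in>space M. t \<le> three_valued a b c P1 P2 P3 \<omega>} =
    (if t \<le> a then prob P1 else 0) + (if t \<le> b then prob P2 else 0) + (if t \<le> c then prob P3 else 0)"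
proof -
  define S1 S2 S3 where "S1 = (if t \<le> a then P1 else {})" and "S2 = (if t \<le> b then P2 else {})"
    and "S3 = (if t \<le> c then P3 else {})"
  have ev: "S1 \<in> events" "S2 \<in> events" "S3 \<in> events"
    using P by (auto simp: S1_def S2_def S3_def partition3_def)
  have "\<omega> \<in> S1 \<union> S2 \<union> S3 \<longleftrightarrow> \<omega> \<in> space M \<and> t \<le> three_valued a b c P1 P2 P3 \<omega>" for \<omega>
  proof (cases "\<omega> \<in> space M")
    case True
    then show ?thesis
      by (rule partition3_cases[OF P]) (use P in \<open>auto simp: three_valued_eq S1_def S2_def S3_def partition3_def\<close>)
  qed (use P in \<open>auto simp: S1_def S2_def S3_def partition3_def\<close>)
  then have "{\<omega>\<in>space M. t \<le> three_valued a b c P1 P2 P3 \<omega>} = S1 \<union> S2 \<union> S3" by blast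
  moreover have "prob (S1 \<union> S2 \<union> S3) = prob S1 + prob S2 + prob S3"
    using ev P by (subst finite_measure_Union; auto simp: S1_def S2_def S3_def partition3_def)+
  ultimately show ?thesis by (simp add: S1_def S2_def S3_def)
qed

lemma integral_three_valued:
  fixes f :: "real \<Rightarrow> real"
  assumes P: "partition3 P1 P2 P3"
  shows "(\<integral>\<omega>. f (three_valued a b c P1 P2 P3 \<omega>) \<partial>M) = f a * prob P1 + f b * prob P2 + f c * prob P3"
proof -
  have ev: "P1 \<in> events" "P2 \<in> events" "P3 \<in> events" using P by (auto simp: partition3_def)
  have "(\<integral>\<omega>. f (three_valued a b c P1 P2 P3 \<omega>) \<partial>M) =
      (\<integral>\<omega>. f a * indicator P1 \<omega> + f b * indicator P2 \<omega> + f c * indicator P3 \<omega> \<partial>M)"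
  proof (rule Bochner_Integration.integral_cong[OF refl])
    fix \<omega> assume "\<omega> \<in> space M"
    then show "f (three_valued a b c P1 P2 P3 \<omega>) = f a * indicator P1 \<omega> + f b * indicator P2 \<omega> + f c * indicator P3 \<omega>"
      by (rule partition3_cases[OF P]) (use P in \<open>auto simp: three_valued_eq partition3_def indicator_def\<close>)
  qed
  also have "\<dots> = f a * prob P1 + f b * prob P2 + f c * prob P3"
    using ev by (simp add: emeasure_eq_measure)
  finally show ?thesis .
qed

end

locale axiomatic_functional = prob_space M for M :: "'a measure" +
  fixes I :: "('a \<Rightarrow> real) \<Rightarrow> real"
  assumes strongly_monotone: "strongly_monotone M I"
    and constant_additive: "constant_additive M I"
    and positively_homogeneous: "positively_homogeneous M I"
    and concordant_additive: "concordant_additive M I"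
    and adequate: "adequate M"
begin

lemma I_stoch_dom_mono:
  assumes "X \<in> B0 M" "Y \<in> B0 M" "\<And>t. prob {\<omega>\<in>space M. t \<le> Y \<omega>} \<le> prob {\<omega>\<in>space M. t \<le> X \<omega>}"
  shows "I Y \<le> I X"
  using strongly_monotone assms unfolding strongly_monotone_def by blast

lemma I_stoch_dom_strict_mono:
  assumes "X \<in> B0 M" "Y \<in> B0 M" "\<And>t. prob {\<omega>\<in>space M. t \<le> Y \<omega>} \<le> prob {\<omega>\<in>space M. t \<le> X \<omega>}"
    and "prob {\<omega>\<in>space M. t \<le> Y \<omega>} < prob {\<omega>\<in>space M. t \<le> X \<omega>}"
  shows "I Y < I X"
  using strongly_monotone assms unfolding strongly_monotone_def by blast

lemma I_law_invariant:
  assumes "X \<in> B0 M" "Y \<in> B0 M" "\<And>t. prob {\<omega>\<in>space M. t \<le> X \<omega>} = prob {\<omega>\<in>space M. t \<le> Y \<omega>}"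
  shows "I X = I Y"
  using I_stoch_dom_mono[OF assms(1,2)] I_stoch_dom_mono[OF assms(2,1)] assms(3) by (simp add: antisym)

lemma I_AE_cong:
  assumes X: "X \<in> B0 M" and Y: "Y \<in> B0 M" and N: "N \<in> events" "prob N = 0"
    and eq: "\<And>\<omega>. \<omega> \<in> space M - N \<Longrightarrow> X \<omega> = Y \<omega>"
  shows "I X = I Y"
proof (rule I_law_invariant[OF X Y])
  fix t
  have le: "prob {\<omega>\<in>space M. t \<le> U \<omega>} \<le> prob {\<omega>\<in>space M. t \<le> V \<omega>}"
    if V: "V \<in> B0 M" and "\<And>\<omega>. \<omega> \<in> space M - N \<Longrightarrow> U \<omega> = V \<omega>" for U V
  proof -
    have "prob {\<omega>\<in>space M. t \<le> U \<omega>} \<le> prob ({\<omega>\<in>space M. t \<le> V \<omega>} \<union> N)"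
      using that N B0_sets[OF V] by (intro finite_measure_mono) auto
    also have "\<dots> \<le> prob {\<omega>\<in>space M. t \<le> V \<omega>} + prob N"
      using N B0_sets[OF V] by (intro measure_Un_le) (auto simp: fmeasurable_def emeasure_eq_measure)
    finally show ?thesis using N by simp
  qed
  show "prob {\<omega>\<in>space M. t \<le> X \<omega>} = prob {\<omega>\<in>space M. t \<le> Y \<omega>}"
    using le[OF Y eq] le[OF X] eq by (simp add: antisym)
qed

lemma I_cong: "X \<in> B0 M \<Longrightarrow> (\<And>\<omega>. \<omega> \<in> space M \<Longrightarrow> Y \<omega> = X \<omega>) \<Longrightarrow> I Y = I X"
  using I_AE_cong[of Y X "{}"] B0_cong[of X M Y] by simp

lemma I_add_const: "X \<in> B0 M \<Longrightarrow> I (\<lambda>\<omega>. X \<omega> + m) = I X + m"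
  using constant_additive unfolding constant_additive_def by blast

lemma I_scale: "X \<in> B0 M \<Longrightarrow> c \<ge> 0 \<Longrightarrow> I (\<lambda>\<omega>. c * X \<omega>) = c * I X"
  using positively_homogeneous unfolding positively_homogeneous_def by blast

lemma I_concordant_add:
  "X \<in> B0 M \<Longrightarrow> Y \<in> B0 M \<Longrightarrow> {\<omega>\<in>space M. X \<omega> < I X} = {\<omega>\<in>space M. Y \<omega> < I Y} \<Longrightarrow>
    I (\<lambda>\<omega>. X \<omega> + Y \<omega>) = I X + I Y"
  using concordant_additive unfolding concordant_additive_def by blast

lemma I_const [simp]: "I (\<lambda>\<omega>. c) = c"
  using I_scale[OF B0_const, of 0 0] I_add_const[OF B0_const, of 0 c] by simp

lemma I_mono:
  assumes X: "X \<in> B0 M" and Y: "Y \<in> B0 M" and le: "\<And>\<omega>. \<omega> \<in> space M \<Longrightarrow> Y \<omega> \<le> X \<omega>"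
  shows "I Y \<le> I X"
proof (rule I_stoch_dom_mono[OF X Y])
  fix t
  have "{\<omega>\<in>space M. t \<le> Y \<omega>} \<subseteq> {\<omega>\<in>space M. t \<le> X \<omega>}" using le by (auto intro: order_trans)
  then show "prob {\<omega>\<in>space M. t \<le> Y \<omega>} \<le> prob {\<omega>\<in>space M. t \<le> X \<omega>}"
    using B0_sets[OF X] by (intro finite_measure_mono) auto
qed

text \<open>Strict monotonicity for pointwise comparison: on a set of positive probability \<open>Y < X\<close>, so
  some threshold \<open>x\<close> in the finite range of \<open>X\<close> separates \<open>Y\<close> from \<open>X\<close> with positive probability.\<close>

lemma I_le_const: "X \<in> B0 M \<Longrightarrow> (\<And>\<omega>. \<omega> \<in> space M \<Longrightarrow> X \<omega> \<le> c) \<Longrightarrow> I X \<le> c"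
  using I_mono[OF B0_const, of X c] by simp

lemma I_ge_const: "X \<in> B0 M \<Longrightarrow> (\<And>\<omega>. \<omega> \<in> space M \<Longrightarrow> c \<le> X \<omega>) \<Longrightarrow> c \<le> I X"
  using I_mono[OF _ B0_const, of X c] by simp

lemma I_strict_mono:
  assumes X: "X \<in> B0 M" and Y: "Y \<in> B0 M" and le: "\<And>\<omega>. \<omega> \<in> space M \<Longrightarrow> Y \<omega> \<le> X \<omega>"
    and pos: "prob {\<omega>\<in>space M. Y \<omega> < X \<omega>} > 0"
  shows "I Y < I X"
proof -
  define G where "G x = {\<omega>\<in>space M. Y \<omega> < x \<and> x \<le> X \<omega>}" for x
  have [measurable]: "X \<in> borel_measurable M" "Y \<in> borel_measurable M"
    using X Y by (simp_all add: B0_borel_measurable)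
  have G: "G x \<in> events" for x
    unfolding G_def by measurable
  have "(\<Union>x\<in>X ` space M. G x) \<in> events"
    using G B0_finite_range[OF X] by (intro sets.finite_UN) auto
  then have "prob {\<omega>\<in>space M. Y \<omega> < X \<omega>} \<le> prob (\<Union>x\<in>X ` space M. G x)"
    by (intro finite_measure_mono) (auto simp: G_def)
  also have "\<dots> \<le> (\<Sum>x\<in>X ` space M. prob (G x))"
    using G B0_finite_range[OF X] by (intro finite_measure_subadditive_finite) auto
  finally have "0 < (\<Sum>x\<in>X ` space M. prob (G x))" using pos by linarith
  moreover have "(\<Sum>x\<in>X ` space M. prob (G x)) \<le> 0" if "\<forall>x. prob (G x) \<le> 0"
    using that by (intro sum_nonpos) auto
  ultimately obtain x where x: "prob (G x) > 0" by (meson not_le)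
  have "{\<omega>\<in>space M. x \<le> X \<omega>} = {\<omega>\<in>space M. x \<le> Y \<omega>} \<union> G x"
    and "{\<omega>\<in>space M. x \<le> Y \<omega>} \<inter> G x = {}"
    using le by (auto simp: G_def intro: order_trans)
  then have "prob {\<omega>\<in>space M. x \<le> X \<omega>} = prob {\<omega>\<in>space M. x \<le> Y \<omega>} + prob (G x)"
    using G B0_sets[OF Y] by (simp add: finite_measure_Union)
  then have "prob {\<omega>\<in>space M. x \<le> Y \<omega>} < prob {\<omega>\<in>space M. x \<le> X \<omega>}" using x by simp
  moreover have "prob {\<omega>\<in>space M. t \<le> Y \<omega>} \<le> prob {\<omega>\<in>space M. t \<le> X \<omega>}" for t
    using le by (intro finite_measure_mono) (auto intro: order_trans)
  ultimately show ?thesis by (rule I_stoch_dom_strict_mono[OF X Y, rotated])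
qed

lemma I_lipschitz:
  assumes X: "X \<in> B0 M" and Y: "Y \<in> B0 M" and d: "\<And>\<omega>. \<omega> \<in> space M \<Longrightarrow> \<bar>X \<omega> - Y \<omega>\<bar> \<le> \<delta>"
  shows "\<bar>I X - I Y\<bar> \<le> \<delta>"
proof -
  have "X \<omega> \<le> Y \<omega> + \<delta>" "Y \<omega> \<le> X \<omega> + \<delta>" if "\<omega> \<in> space M" for \<omega>
    using d[OF that] by linarith+
  then have "I X \<le> I (\<lambda>\<omega>. Y \<omega> + \<delta>)" and "I Y \<le> I (\<lambda>\<omega>. X \<omega> + \<delta>)"
    using X Y by (auto intro!: I_mono B0_add)
  then show ?thesis using I_add_const[OF X, of \<delta>] I_add_const[OF Y, of \<delta>] by (simp add: abs_le_iff)
qed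

lemma continuous_on_I_family:
  assumes B0: "\<And>c. X c \<in> B0 M"
    and lip: "\<And>c c' \<omega>. \<omega> \<in> space M \<Longrightarrow> \<bar>X c \<omega> - X c' \<omega>\<bar> \<le> \<bar>c - c'\<bar>"
  shows "continuous_on UNIV (\<lambda>c. I (X c))"
proof (rule lipschitz_on_continuous_on)
  show "1-lipschitz_on UNIV (\<lambda>c. I (X c))"
    using I_lipschitz[OF B0 B0 lip] by (intro lipschitz_onI) (auto simp: dist_real_def)
qed

definition loss_ratio :: "'a set \<Rightarrow> real" where
  "loss_ratio A = prob (space M - A) * (1 - I (indicator (space M - A))) /
    (prob A * I (indicator (space M - A)))"

definition zero_level :: "'a set \<Rightarrow> ('a \<Rightarrow> real) \<Rightarrow> bool" where
  "zero_level A Z \<longleftrightarrow> Z \<in> B0 M \<and> I Z = 0 \<and> {\<omega>\<in>space M. Z \<omega> < 0} = A"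

lemma zero_level_add:
  assumes "zero_level A Z" "zero_level A W"
  shows "zero_level A (\<lambda>\<omega>. Z \<omega> + W \<omega>)"
proof -
  have Z: "Z \<in> B0 M" "I Z = 0" "{\<omega>\<in>space M. Z \<omega> < 0} = A"
    and W: "W \<in> B0 M" "I W = 0" "{\<omega>\<in>space M. W \<omega> < 0} = A"
    using assms by (auto simp: zero_level_def)
  then have sign: "Z \<omega> < 0 \<longleftrightarrow> W \<omega> < 0" if "\<omega> \<in> space M" for \<omega> using that by blast
  have "Z \<omega> + W \<omega> < 0 \<longleftrightarrow> Z \<omega> < 0" if "\<omega> \<in> space M" for \<omega>
    by (cases "Z \<omega> < 0") (use sign[OF that] in auto)
  then have "{\<omega>\<in>space M. Z \<omega> + W \<omega> < 0} = A" using Z(3) by auto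
  moreover have "I (\<lambda>\<omega>. Z \<omega> + W \<omega>) = 0" using Z W I_concordant_add[OF Z(1) W(1)] by simp
  ultimately show ?thesis using Z W by (auto simp: zero_level_def)
qed

lemma zero_level_scale:
  assumes "zero_level A Z" "c > 0"
  shows "zero_level A (\<lambda>\<omega>. c * Z \<omega>)"
proof -
  have Z: "Z \<in> B0 M" "I Z = 0" "{\<omega>\<in>space M. Z \<omega> < 0} = A" using assms(1) by (auto simp: zero_level_def)
  have "{\<omega>\<in>space M. c * Z \<omega> < 0} = {\<omega>\<in>space M. Z \<omega> < 0}"
    using assms(2) by (auto simp: mult_less_0_iff)
  then show ?thesis
    using Z I_scale[OF Z(1), of c] B0_mult[OF B0_const Z(1), of c] assms(2) by (simp add: zero_level_def)
qed

lemma zero_level_cong: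
  assumes "zero_level A Z" and eq: "\<And>\<omega>. \<omega> \<in> space M \<Longrightarrow> W \<omega> = Z \<omega>"
  shows "zero_level A W"
proof -
  have Z: "Z \<in> B0 M" "I Z = 0" "{\<omega>\<in>space M. Z \<omega> < 0} = A" using assms(1) by (auto simp: zero_level_def)
  have "{\<omega>\<in>space M. W \<omega> < 0} = {\<omega>\<in>space M. Z \<omega> < 0}" using eq by auto
  then show ?thesis using Z B0_cong[OF Z(1) eq] I_cong[OF Z(1) eq] by (simp add: zero_level_def)
qed

lemma zero_level_sum:
  assumes "finite U" "U \<noteq> {}" "\<And>x. x \<in> U \<Longrightarrow> zero_level A (T x)"
  shows "zero_level A (\<lambda>\<omega>. \<Sum>x\<in>U. T x \<omega>)"
  using assms
proof (induction U rule: finite_ne_induct)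
  case (singleton x)
  then show ?case by simp
next
  case (insert x F)
  then show ?case using zero_level_add[of A "T x" "\<lambda>\<omega>. \<Sum>y\<in>F. T y \<omega>"] by simp
qed

end

lemma the_root_between:
  fixes f :: "real \<Rightarrow> real"
  assumes cont: "continuous_on {a..b} f" and "inj f" "a \<le> b" and sign: "f a * f b \<le> 0"
  shows "a \<le> (THE c. f c = 0)" "(THE c. f c = 0) \<le> b" "f (THE c. f c = 0) = 0"
proof -
  have "f a \<le> 0 \<and> 0 \<le> f b \<or> f b \<le> 0 \<and> 0 \<le> f a"
    using sign by (auto simp: mult_le_0_iff)
  then have "\<exists>c. a \<le> c \<and> c \<le> b \<and> f c = 0"
    using IVT'[of f a 0 b] IVT2'[of f b 0 a] cont \<open>a \<le> b\<close> by blast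
  then obtain c where c: "a \<le> c" "c \<le> b" "f c = 0" by blast
  moreover have "(THE c. f c = 0) = c"
    by (rule the_equality[where P = "\<lambda>c. f c = 0", OF c(3)]) (metis c(3) injD \<open>inj f\<close>)
  ultimately show "a \<le> (THE c. f c = 0)" "(THE c. f c = 0) \<le> b" "f (THE c. f c = 0) = 0"
    by simp_all
qed

locale loss_event = axiomatic_functional +
  fixes A :: "'a set"
  assumes A_event: "A \<in> events" and A_pos: "0 < prob A" and A_less_1: "prob A < 1"
begin

abbreviation "Ac \<equiv> space M - A"

definition "h = I (indicator Ac)"
definition "\<kappa> = h / ((1 - h) * prob Ac)"
definition "\<gamma> = (1 - h) / h"

lemma Ac_event: "Ac \<in> events"
  using A_event by simp

lemma A_subset: "A \<subseteq> space M"
  using A_event sets.sets_into_space by blast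

lemma prob_Ac_pos: "0 < prob Ac"
  using A_event A_less_1 by (simp add: prob_compl)

lemma h_pos: "0 < h"
proof -
  have "{\<omega>\<in>space M. (0::real) < indicator Ac \<omega>} = Ac" by (auto simp: indicator_def)
  then have "I (\<lambda>\<omega>. 0) < I (indicator Ac)"
    using prob_Ac_pos by (intro I_strict_mono B0_indicator Ac_event B0_const) auto
  then show ?thesis by (simp add: h_def)
qed

lemma h_less_1: "h < 1"
proof -
  have "{\<omega>\<in>space M. indicator Ac \<omega> < (1::real)} = A" using A_subset by (auto simp: indicator_def)
  then have "I (indicator Ac) < I (\<lambda>\<omega>. 1)"
    using A_pos by (intro I_strict_mono B0_const B0_indicator Ac_event) (auto simp: indicator_def)
  then show ?thesis by (simp add: h_def)
qed

lemma \<kappa>_pos: "0 < \<kappa>"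
  using h_pos h_less_1 prob_Ac_pos by (simp add: \<kappa>_def)

lemma \<gamma>_pos: "0 < \<gamma>"
  using h_pos h_less_1 by (simp add: \<gamma>_def)

lemma \<gamma>_h: "(c * \<gamma> + c) * h = c"
proof -
  have "(c * \<gamma> + c) * h = c * ((1 - h) + h)"
    using h_pos by (simp add: \<gamma>_def field_simps)
  then show ?thesis by simp
qed

lemma two_valued_B0: "(\<lambda>\<omega>. a * indicator Ac \<omega> - b * indicator A \<omega>) \<in> B0 M"
  by (intro B0_diff B0_scaled_indicator Ac_event A_event)

lemma I_two_valued:
  assumes "a + b \<ge> 0"
  shows "I (\<lambda>\<omega>. a * indicator Ac \<omega> - b * indicator A \<omega>) = (a + b) * h - b"
proof -
  have "I (\<lambda>\<omega>. a * indicator Ac \<omega> - b * indicator A \<omega>) = I (\<lambda>\<omega>. (a + b) * indicator Ac \<omega> + - b)"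
    by (rule I_cong[OF B0_add[OF B0_scaled_indicator[OF Ac_event] B0_const]])
      (auto simp: indicator_def algebra_simps)
  also have "\<dots> = I (\<lambda>\<omega>. (a + b) * indicator Ac \<omega>) - b"
    using I_add_const[OF B0_scaled_indicator[OF Ac_event], of "a + b" "- b"] by simp
  also have "\<dots> = (a + b) * h - b"
    using I_scale[OF B0_indicator[OF Ac_event] assms] by (simp add: h_def)
  finally show ?thesis .
qed

lemma two_valued_loss_set:
  assumes "a + b > 0"
  shows "{\<omega>\<in>space M. a * indicator Ac \<omega> - b * indicator A \<omega> < I (\<lambda>\<omega>. a * indicator Ac \<omega> - b * indicator A \<omega>)} = A"
proof -
  have "(a + b) * h \<le> (a + b) * 1" using assms h_less_1 by (intro mult_left_mono) auto
  then have "(a + b) * h - b \<le> a" by simp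
  moreover have "- b < (a + b) * h - b" using assms h_pos by simp
  ultimately show ?thesis
    unfolding I_two_valued[OF less_imp_le[OF assms]] using A_subset by (auto simp: indicator_def)
qed

lemma zero_level_two_valued:
  assumes "0 \<le> a" "0 < b" "(a + b) * h = b"
  shows "zero_level A (\<lambda>\<omega>. a * indicator Ac \<omega> - b * indicator A \<omega>)"
  using assms I_two_valued[of a b] two_valued_B0[of a b] A_subset
  by (auto simp: zero_level_def indicator_def)

definition gain_probe :: "'a set \<Rightarrow> real \<Rightarrow> 'a \<Rightarrow> real" where
  "gain_probe D c = (\<lambda>\<omega>. indicator D \<omega> - c * indicator A \<omega>)"

definition "gain_price D = (THE c. I (gain_probe D c) = 0)"

lemma gain_probe_B0: "D \<in> events \<Longrightarrow> gain_probe D c \<in> B0 M"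
  unfolding gain_probe_def by (intro B0_diff B0_indicator B0_scaled_indicator A_event)

lemma gain_probe_three_valued:
  assumes "D \<in> events" "D \<subseteq> Ac"
  shows "partition3 D (Ac - D) A"
    and "\<omega> \<in> space M \<Longrightarrow> gain_probe D c \<omega> = three_valued 1 0 (- c) D (Ac - D) A \<omega>"
  using assms A_event A_subset by (auto simp: partition3_def gain_probe_def three_valued_def indicator_def)

lemma prob_gain_probe_ge:
  assumes "D \<in> events" "D \<subseteq> Ac"
  shows "prob {\<omega>\<in>space M. t \<le> gain_probe D c \<omega>} =
    (if t \<le> 1 then prob D else 0) + (if t \<le> 0 then prob (Ac - D) else 0) + (if t \<le> - c then prob A else 0)"
proof -
  have "{\<omega>\<in>space M. t \<le> gain_probe D c \<omega>} = {\<omega>\<in>space M. t \<le> three_valued 1 0 (- c) D (Ac - D) A \<omega>}"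
    using gain_probe_three_valued(2)[OF assms] by auto
  then show ?thesis using prob_three_valued_ge[OF gain_probe_three_valued(1)[OF assms]] by simp
qed

lemma I_gain_probe_strict_antimono:
  assumes "D \<in> events" "c < c'"
  shows "I (gain_probe D c') < I (gain_probe D c)"
proof (rule I_strict_mono[OF gain_probe_B0 gain_probe_B0])
  have "{\<omega>\<in>space M. gain_probe D c' \<omega> < gain_probe D c \<omega>} = A"
    using assms A_subset by (auto simp: gain_probe_def indicator_def)
  then show "0 < prob {\<omega>\<in>space M. gain_probe D c' \<omega> < gain_probe D c \<omega>}" using A_pos by simp
qed (use assms in \<open>auto simp: gain_probe_def indicator_def\<close>)

lemma inj_I_gain_probe: "D \<in> events \<Longrightarrow> inj (\<lambda>c. I (gain_probe D c))"
  by (rule inj_onI) (metis I_gain_probe_strict_antimono less_irrefl linorder_neqE_linordered_idom)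

lemma gain_price:
  assumes D: "D \<in> events" "D \<subseteq> Ac"
  shows "I (gain_probe D (gain_price D)) = 0" "0 \<le> gain_price D"
proof -
  have "continuous_on UNIV (\<lambda>c. I (gain_probe D c))"
    using D by (intro continuous_on_I_family gain_probe_B0) (auto simp: gain_probe_def indicator_def)
  moreover have "0 \<le> I (gain_probe D 0)"
    using D by (intro I_ge_const gain_probe_B0) (auto simp: gain_probe_def)
  moreover have "I (gain_probe D (h / (1 - h))) \<le> 0"
  proof -
    have "I (gain_probe D (h / (1 - h))) \<le> I (\<lambda>\<omega>. 1 * indicator Ac \<omega> - h / (1 - h) * indicator A \<omega>)"
      using D by (intro I_mono two_valued_B0 gain_probe_B0) (auto simp: gain_probe_def indicator_def)
    also have "\<dots> = 0"
      using h_pos h_less_1 by (subst I_two_valued) (auto simp: field_simps)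
    finally show ?thesis .
  qed
  ultimately show "I (gain_probe D (gain_price D)) = 0" "0 \<le> gain_price D"
    using the_root_between[of 0 "h / (1 - h)" "\<lambda>c. I (gain_probe D c)"] inj_I_gain_probe[OF D(1)]
      h_pos h_less_1 unfolding gain_price_def by (auto intro: continuous_on_subset mult_nonneg_nonpos)
qed

lemma gain_price_eq: "D \<in> events \<Longrightarrow> D \<subseteq> Ac \<Longrightarrow> I (gain_probe D c) = 0 \<Longrightarrow> gain_price D = c"
  using gain_price(1) inj_I_gain_probe by (metis injD)

lemma gain_price_pos:
  assumes D: "D \<in> events" "D \<subseteq> Ac" "prob D > 0"
  shows "0 < gain_price D"
proof (rule ccontr)
  assume "\<not> 0 < gain_price D"
  then have "gain_price D = 0" using gain_price(2)[OF D(1,2)] by simp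
  moreover have "{\<omega>\<in>space M. (0::real) < indicator D \<omega>} = D"
    using D sets.sets_into_space by (auto simp: indicator_def)
  then have "I (\<lambda>\<omega>. 0) < I (indicator D)"
    using D by (intro I_strict_mono B0_indicator B0_const) auto
  ultimately show False using gain_price(1)[OF D(1,2)] by (simp add: gain_probe_def)
qed

lemma zero_level_gain_probe:
  assumes D: "D \<in> events" "D \<subseteq> Ac" "prob D > 0"
  shows "zero_level A (gain_probe D (gain_price D))"
  using gain_price[OF D(1,2)] gain_price_pos[OF D] gain_probe_B0[OF D(1)] A_subset D(2)
  unfolding zero_level_def by (auto simp: gain_probe_def indicator_def)

lemma gain_price_add:
  assumes D: "D \<in> events" "D \<subseteq> Ac" "prob D > 0" and D': "D' \<in> events" "D' \<subseteq> Ac" "prob D' > 0"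
    and disj: "D \<inter> D' = {}"
  shows "gain_price (D \<union> D') = gain_price D + gain_price D'"
proof -
  have "zero_level A (\<lambda>\<omega>. gain_probe D (gain_price D) \<omega> + gain_probe D' (gain_price D') \<omega>)"
    by (intro zero_level_add zero_level_gain_probe D D')
  then have "zero_level A (gain_probe (D \<union> D') (gain_price D + gain_price D'))"
    by (rule zero_level_cong) (use disj in \<open>auto simp: gain_probe_def indicator_def algebra_simps\<close>)
  then show ?thesis using D D' by (intro gain_price_eq) (auto simp: zero_level_def)
qed

lemma gain_price_mono:
  assumes D: "D \<in> events" "D \<subseteq> Ac" and D': "D' \<in> events" "D' \<subseteq> Ac" and le: "prob D \<le> prob D'"
  shows "gain_price D \<le> gain_price D'"
proof (rule ccontr)
  assume "\<not> gain_price D \<le> gain_price D'"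
  then have less: "gain_price D' < gain_price D" by simp
  let ?c = "gain_price D"
  have "prob (Ac - D) = prob Ac - prob D" and "prob (Ac - D') = prob Ac - prob D'"
    using D D' Ac_event by (auto simp: finite_measure_Diff)
  then have "prob {\<omega>\<in>space M. t \<le> gain_probe D ?c \<omega>} \<le> prob {\<omega>\<in>space M. t \<le> gain_probe D' ?c \<omega>}" for t
    using le gain_price(2)[OF D] by (simp add: prob_gain_probe_ge D D')
  then have "I (gain_probe D ?c) \<le> I (gain_probe D' ?c)"
    by (rule I_stoch_dom_mono[OF gain_probe_B0[OF D'(1)] gain_probe_B0[OF D(1)]])
  moreover have "I (gain_probe D' ?c) < I (gain_probe D' (gain_price D'))"
    by (rule I_gain_probe_strict_antimono[OF D'(1) less])
  ultimately show False using gain_price(1)[OF D] gain_price(1)[OF D'] by simp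
qed

lemma gain_price_null:
  assumes D: "D \<in> events" "D \<subseteq> Ac" "prob D = 0"
  shows "gain_price D = 0"
proof (rule gain_price_eq[OF D(1,2)])
  have "I (gain_probe D 0) = I (\<lambda>\<omega>. 0)"
    using D by (intro I_AE_cong[of _ _ D] gain_probe_B0) (auto simp: gain_probe_def)
  then show "I (gain_probe D 0) = 0" by simp
qed

lemma gain_price_Ac: "gain_price Ac = h / (1 - h)"
proof (rule gain_price_eq[OF Ac_event order_refl])
  have "I (gain_probe Ac (h / (1 - h))) = I (\<lambda>\<omega>. 1 * indicator Ac \<omega> - h / (1 - h) * indicator A \<omega>)"
    by (simp add: gain_probe_def)
  also have "\<dots> = 0"
    using h_pos h_less_1 by (subst I_two_valued) (auto simp: field_simps)
  finally show "I (gain_probe Ac (h / (1 - h))) = 0" .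
qed

lemma gain_price_linear:
  assumes "D \<in> events" "D \<subseteq> Ac"
  shows "gain_price D = \<kappa> * prob D"
proof -
  have "prob_monotone_additive Ac gain_price"
    by (intro prob_monotone_additiveI gain_price_mono gain_price_add gain_price_null)
  from adequate_prob_monotone_additive_proportional[OF adequate Ac_event prob_Ac_pos this assms]
  show ?thesis by (simp add: gain_price_Ac \<kappa>_def)
qed


text \<open>A nonnegative gain \<open>W\<close> on \<open>Ac\<close> is a positive combination of indicators of its atoms; each
  atom is balanced by its linear price, and concordance adds the balanced pieces up.\<close>

lemma zero_level_gain_compensation:
  assumes W: "W \<in> B0 M" and W_nonneg: "\<And>\<omega>. \<omega> \<in> space M \<Longrightarrow> 0 \<le> W \<omega>"
    and W_A: "\<And>\<omega>. \<omega> \<in> A \<Longrightarrow> W \<omega> = 0" and pos: "integral\<^sup>L M W > 0"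
  shows "zero_level A (\<lambda>\<omega>. W \<omega> - \<kappa> * integral\<^sup>L M W * indicator A \<omega>)"
proof -
  define D where "D x = {\<omega>\<in>space M. W \<omega> = x}" for x
  define V where "V = {x\<in>W ` space M. 0 < x \<and> 0 < prob (D x)}"
  define N where "N = {\<omega>\<in>space M. prob (D (W \<omega>)) = 0}"
  have D: "D x \<in> events" for x unfolding D_def by (rule B0_sets[OF W])
  have N: "N \<in> events" "prob N = 0" using B0_null_atoms[OF W] by (simp_all add: N_def D_def)
  have finV: "finite V" using B0_finite_range[OF W] by (simp add: V_def)
  have D_Ac: "D x \<subseteq> Ac" if "x \<in> V" for x
    using that W_A by (auto simp: D_def V_def)
  have EW: "integral\<^sup>L M W = (\<Sum>x\<in>V. x * prob (D x))"
  proof -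
    have "integral\<^sup>L M W = (\<Sum>x\<in>W ` space M. x * prob (D x))"
      using B0_integral[OF W, of "\<lambda>x. x"] by (simp add: D_def)
    also have "\<dots> = (\<Sum>x\<in>V. x * prob (D x))"
      using W_nonneg measure_nonneg[of M] by (intro sum.mono_neutral_right B0_finite_range[OF W])
        (auto simp: V_def less_eq_real_def)
    finally show ?thesis .
  qed
  then have "V \<noteq> {}" using pos by auto
  define T where "T x = (\<lambda>\<omega>. x * gain_probe (D x) (gain_price (D x)) \<omega>)" for x
  define Z where "Z = (\<lambda>\<omega>. W \<omega> - \<kappa> * integral\<^sup>L M W * indicator A \<omega>)"
  have "zero_level A (\<lambda>\<omega>. \<Sum>x\<in>V. T x \<omega>)"
    using finV \<open>V \<noteq> {}\<close> D D_Ac unfolding T_def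
    by (intro zero_level_sum zero_level_scale zero_level_gain_probe) (auto simp: V_def)
  then have sum: "(\<lambda>\<omega>. \<Sum>x\<in>V. T x \<omega>) \<in> B0 M" "I (\<lambda>\<omega>. \<Sum>x\<in>V. T x \<omega>) = 0"
    by (simp_all add: zero_level_def)
  have "Z \<omega> = (\<Sum>x\<in>V. T x \<omega>)" if \<omega>: "\<omega> \<in> space M - N" for \<omega>
  proof -
    have "(\<Sum>x\<in>V. T x \<omega>) = (\<Sum>x\<in>V. x * indicator (D x) \<omega>) - \<kappa> * (\<Sum>x\<in>V. x * prob (D x)) * indicator A \<omega>"
      using D D_Ac
      by (simp add: T_def gain_probe_def gain_price_linear algebra_simps sum_subtractf sum_distrib_left
          sum_distrib_right cong: sum.cong)
    moreover have "(\<Sum>x\<in>V. x * indicator (D x) \<omega>) = W \<omega>"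
    proof (cases "W \<omega> \<in> V")
      case True
      then show ?thesis using finV \<omega> by (simp add: D_def indicator_def if_distrib cong: sum.cong)
    next
      case False
      then have "W \<omega> = 0"
        using \<omega> W_nonneg[of \<omega>] measure_nonneg[of M "D (W \<omega>)"] by (auto simp: V_def N_def)
      then have "x * indicator (D x) \<omega> = 0" if "x \<in> V" for x
        using that by (auto simp: D_def V_def indicator_def)
      then show ?thesis using \<open>W \<omega> = 0\<close> sum.neutral[of V "\<lambda>x. x * indicator (D x) \<omega>"] by simp
    qed
    ultimately show ?thesis by (simp add: EW Z_def)
  qed
  then have "I Z = 0"
    using I_AE_cong[OF _ sum(1) N] sum(2) W by (simp add: Z_def B0_diff B0_scaled_indicator A_event)
  moreover have "{\<omega>\<in>space M. Z \<omega> < 0} = A"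
    using \<kappa>_pos pos W_nonneg W_A A_subset by (force simp: Z_def indicator_def)
  ultimately show ?thesis
    using W by (simp add: zero_level_def Z_def B0_diff B0_scaled_indicator A_event)
qed

definition loss_probe :: "real \<Rightarrow> 'a set \<Rightarrow> real \<Rightarrow> 'a \<Rightarrow> real" where
  "loss_probe \<mu> E d = (\<lambda>\<omega>. d * indicator Ac \<omega> - \<mu> * indicator A \<omega> - indicator E \<omega>)"

definition "loss_price \<mu> E = (THE d. I (loss_probe \<mu> E d) = 0)"

lemma loss_probe_B0: "E \<in> events \<Longrightarrow> loss_probe \<mu> E d \<in> B0 M"
  unfolding loss_probe_def by (intro B0_diff B0_indicator B0_scaled_indicator A_event Ac_event)

lemma prob_loss_probe_ge:
  assumes "E \<in> events" "E \<subseteq> A"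
  shows "prob {\<omega>\<in>space M. t \<le> loss_probe \<mu> E d \<omega>} =
    (if t \<le> d then prob Ac else 0) + (if t \<le> - \<mu> - 1 then prob E else 0) +
    (if t \<le> - \<mu> then prob (A - E) else 0)"
proof -
  have P: "partition3 Ac E (A - E)"
    using assms A_event A_subset by (auto simp: partition3_def)
  have "{\<omega>\<in>space M. t \<le> loss_probe \<mu> E d \<omega>} =
      {\<omega>\<in>space M. t \<le> three_valued d (- \<mu> - 1) (- \<mu>) Ac E (A - E) \<omega>}"
    using assms by (auto simp: loss_probe_def three_valued_def indicator_def)
  then show ?thesis using prob_three_valued_ge[OF P] by simp
qed

lemma I_loss_probe_strict_mono:
  assumes "E \<in> events" "d < d'"
  shows "I (loss_probe \<mu> E d) < I (loss_probe \<mu> E d')"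
proof (rule I_strict_mono[OF loss_probe_B0 loss_probe_B0])
  have "{\<omega>\<in>space M. loss_probe \<mu> E d \<omega> < loss_probe \<mu> E d' \<omega>} = Ac"
    using assms by (auto simp: loss_probe_def indicator_def)
  then show "0 < prob {\<omega>\<in>space M. loss_probe \<mu> E d \<omega> < loss_probe \<mu> E d' \<omega>}"
    using prob_Ac_pos by simp
qed (use assms in \<open>auto simp: loss_probe_def indicator_def\<close>)

lemma inj_I_loss_probe: "E \<in> events \<Longrightarrow> inj (\<lambda>d. I (loss_probe \<mu> E d))"
  by (rule inj_onI) (metis I_loss_probe_strict_mono less_irrefl linorder_neqE_linordered_idom)

lemma loss_price:
  assumes E: "E \<in> events" "E \<subseteq> A" and "\<mu> > 0"
  shows "I (loss_probe \<mu> E (loss_price \<mu> E)) = 0" "0 \<le> loss_price \<mu> E"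
proof -
  let ?b = "(\<mu> + 1) * \<gamma>"
  have "continuous_on UNIV (\<lambda>d. I (loss_probe \<mu> E d))"
    using E by (intro continuous_on_I_family loss_probe_B0) (auto simp: loss_probe_def indicator_def)
  moreover have "I (loss_probe \<mu> E 0) \<le> 0"
    using E \<open>\<mu> > 0\<close> by (intro I_le_const loss_probe_B0) (auto simp: loss_probe_def indicator_def)
  moreover have "0 \<le> I (loss_probe \<mu> E ?b)"
  proof -
    have "0 = I (\<lambda>\<omega>. ?b * indicator Ac \<omega> - (\<mu> + 1) * indicator A \<omega>)"
      using \<open>\<mu> > 0\<close> \<gamma>_pos \<gamma>_h[of "\<mu> + 1"] by (subst I_two_valued) auto
    also have "\<dots> \<le> I (loss_probe \<mu> E ?b)"
      using E by (intro I_mono two_valued_B0 loss_probe_B0) (auto simp: loss_probe_def indicator_def)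
    finally show ?thesis .
  qed
  moreover have "0 \<le> ?b" using \<open>\<mu> > 0\<close> \<gamma>_pos by simp
  ultimately show "I (loss_probe \<mu> E (loss_price \<mu> E)) = 0" "0 \<le> loss_price \<mu> E"
    using the_root_between[of 0 ?b "\<lambda>d. I (loss_probe \<mu> E d)"] inj_I_loss_probe[OF E(1)]
    unfolding loss_price_def by (auto intro: continuous_on_subset mult_nonpos_nonneg)
qed

lemma loss_price_eq:
  "E \<in> events \<Longrightarrow> E \<subseteq> A \<Longrightarrow> \<mu> > 0 \<Longrightarrow> I (loss_probe \<mu> E d) = 0 \<Longrightarrow> loss_price \<mu> E = d"
  using loss_price(1) inj_I_loss_probe by (metis injD)

lemma zero_level_loss_probe:
  assumes E: "E \<in> events" "E \<subseteq> A" and "\<mu> > 0"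
  shows "zero_level A (loss_probe \<mu> E (loss_price \<mu> E))"
  using loss_price[OF assms] loss_probe_B0[OF E(1)] \<open>\<mu> > 0\<close> A_subset E(2)
  unfolding zero_level_def by (auto simp: loss_probe_def indicator_def)

lemma loss_price_shift:
  assumes E: "E \<in> events" "E \<subseteq> A" and "\<mu> > 0" "\<nu> > 0"
  shows "loss_price (\<mu> + \<nu>) E = loss_price \<mu> E + \<nu> * \<gamma>"
proof -
  have "zero_level A (\<lambda>\<omega>. (\<nu> * \<gamma>) * indicator Ac \<omega> - \<nu> * indicator A \<omega>)"
    using \<open>\<nu> > 0\<close> \<gamma>_pos \<gamma>_h by (intro zero_level_two_valued) auto
  then have "zero_level A (\<lambda>\<omega>. loss_probe \<mu> E (loss_price \<mu> E) \<omega> + ((\<nu> * \<gamma>) * indicator Ac \<omega> - \<nu> * indicator A \<omega>))"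
    by (intro zero_level_add zero_level_loss_probe E \<open>\<mu> > 0\<close>)
  then have "zero_level A (loss_probe (\<mu> + \<nu>) E (loss_price \<mu> E + \<nu> * \<gamma>))"
    by (rule zero_level_cong) (auto simp: loss_probe_def algebra_simps)
  then show ?thesis using E assms by (intro loss_price_eq) (auto simp: zero_level_def)
qed

lemma loss_price_add:
  assumes E: "E \<in> events" "E \<subseteq> A" and E': "E' \<in> events" "E' \<subseteq> A" and disj: "E \<inter> E' = {}"
    and "\<mu> > 0"
  shows "loss_price (2 * \<mu>) (E \<union> E') = loss_price \<mu> E + loss_price \<mu> E'"
proof -
  have "zero_level A (\<lambda>\<omega>. loss_probe \<mu> E (loss_price \<mu> E) \<omega> + loss_probe \<mu> E' (loss_price \<mu> E') \<omega>)"
    by (intro zero_level_add zero_level_loss_probe E E' \<open>\<mu> > 0\<close>)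
  then have "zero_level A (loss_probe (2 * \<mu>) (E \<union> E') (loss_price \<mu> E + loss_price \<mu> E'))"
    by (rule zero_level_cong) (use disj in \<open>auto simp: loss_probe_def indicator_def algebra_simps\<close>)
  then show ?thesis using E E' \<open>\<mu> > 0\<close> by (intro loss_price_eq) (auto simp: zero_level_def)
qed

definition "loss_excess E = loss_price 1 E - \<gamma>"

lemma loss_price_eq_excess:
  assumes E: "E \<in> events" "E \<subseteq> A" and "\<mu> > 0"
  shows "loss_price \<mu> E = loss_excess E + \<mu> * \<gamma>"
proof -
  consider "\<mu> < 1" | "\<mu> = 1" | "\<mu> > 1" by linarith
  then show ?thesis
  proof cases
    case 1
    then have "loss_price (\<mu> + (1 - \<mu>)) E = loss_price \<mu> E + (1 - \<mu>) * \<gamma>"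
      using assms by (intro loss_price_shift) auto
    then show ?thesis by (simp add: loss_excess_def algebra_simps)
  next
    case 3
    then have "loss_price (1 + (\<mu> - 1)) E = loss_price 1 E + (\<mu> - 1) * \<gamma>"
      using assms by (intro loss_price_shift) auto
    then show ?thesis by (simp add: loss_excess_def algebra_simps)
  qed (simp add: loss_excess_def)
qed

lemma loss_excess_add:
  assumes E: "E \<in> events" "E \<subseteq> A" and E': "E' \<in> events" "E' \<subseteq> A" and disj: "E \<inter> E' = {}"
  shows "loss_excess (E \<union> E') = loss_excess E + loss_excess E'"
  using loss_price_add[OF E E' disj, of 1] loss_price_eq_excess[of "E \<union> E'" 2] E E'
  by (simp add: loss_excess_def)

lemma loss_excess_mono:
  assumes E: "E \<in> events" "E \<subseteq> A" and E': "E' \<in> events" "E' \<subseteq> A" and le: "prob E \<le> prob E'"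
  shows "loss_excess E \<le> loss_excess E'"
proof -
  have "loss_price 1 E \<le> loss_price 1 E'"
  proof (rule ccontr)
    assume "\<not> ?thesis"
    then have less: "loss_price 1 E' < loss_price 1 E" by simp
    let ?d = "loss_price 1 E"
    have "prob (A - E) = prob A - prob E" and "prob (A - E') = prob A - prob E'"
      using E E' A_event by (auto simp: finite_measure_Diff)
    then have "prob {\<omega>\<in>space M. t \<le> loss_probe 1 E' ?d \<omega>} \<le> prob {\<omega>\<in>space M. t \<le> loss_probe 1 E ?d \<omega>}" for t
      using le by (simp add: prob_loss_probe_ge E E')
    then have "I (loss_probe 1 E' ?d) \<le> I (loss_probe 1 E ?d)"
      by (rule I_stoch_dom_mono[OF loss_probe_B0[OF E(1)] loss_probe_B0[OF E'(1)]])
    moreover have "I (loss_probe 1 E' (loss_price 1 E')) < I (loss_probe 1 E' ?d)"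
      by (rule I_loss_probe_strict_mono[OF E'(1) less])
    ultimately show False using loss_price(1)[OF E] loss_price(1)[OF E'] by simp
  qed
  then show ?thesis by (simp add: loss_excess_def)
qed

lemma loss_excess_null:
  assumes E: "E \<in> events" "E \<subseteq> A" "prob E = 0"
  shows "loss_excess E = 0"
proof -
  have "I (loss_probe 1 E \<gamma>) = I (\<lambda>\<omega>. \<gamma> * indicator Ac \<omega> - 1 * indicator A \<omega>)"
    using E by (intro I_AE_cong[of _ _ E] loss_probe_B0 two_valued_B0) (auto simp: loss_probe_def)
  also have "\<dots> = 0" using \<gamma>_pos \<gamma>_h[of 1] by (subst I_two_valued) auto
  finally have "loss_price 1 E = \<gamma>" using E by (intro loss_price_eq) auto
  then show ?thesis by (simp add: loss_excess_def)
qed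

lemma loss_excess_A: "loss_excess A = \<gamma>"
proof -
  have "I (loss_probe 1 A (2 * \<gamma>)) = I (\<lambda>\<omega>. (2 * \<gamma>) * indicator Ac \<omega> - 2 * indicator A \<omega>)"
    by (intro I_cong two_valued_B0) (simp add: loss_probe_def)
  also have "\<dots> = 0" using \<gamma>_pos \<gamma>_h[of 2] by (subst I_two_valued) auto
  finally have "loss_price 1 A = 2 * \<gamma>" using A_event by (intro loss_price_eq) auto
  then show ?thesis by (simp add: loss_excess_def)
qed

lemma loss_excess_linear:
  assumes "E \<in> events" "E \<subseteq> A"
  shows "loss_excess E = \<gamma> * prob E / prob A"
proof -
  have "prob_monotone_additive A loss_excess"
    by (intro prob_monotone_additiveI loss_excess_mono loss_excess_add loss_excess_null)
  from adequate_prob_monotone_additive_proportional[OF adequate A_event A_pos this assms]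
  show ?thesis by (simp add: loss_excess_A)
qed

lemma zero_level_loss_shape:
  assumes E: "E \<in> events" "E \<subseteq> A" and "\<mu> > 0" "r \<ge> 0"
  shows "zero_level A (\<lambda>\<omega>. \<gamma> * (\<mu> + r * prob E / prob A) * indicator Ac \<omega> - \<mu> * indicator A \<omega> - r * indicator E \<omega>)"
proof (cases "r = 0")
  case True
  have "zero_level A (\<lambda>\<omega>. (\<mu> * \<gamma>) * indicator Ac \<omega> - \<mu> * indicator A \<omega>)"
    using \<open>\<mu> > 0\<close> \<gamma>_pos \<gamma>_h by (intro zero_level_two_valued) auto
  then show ?thesis using True by (simp add: mult.commute)
next
  case False
  then have "r > 0" using \<open>r \<ge> 0\<close> by simp
  have price: "loss_price (\<mu> / r) E = \<gamma> * prob E / prob A + \<mu> / r * \<gamma>"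
    using loss_price_eq_excess[OF E, of "\<mu> / r"] loss_excess_linear[OF E] \<open>\<mu> > 0\<close> \<open>r > 0\<close> by simp
  have "zero_level A (\<lambda>\<omega>. r * loss_probe (\<mu> / r) E (loss_price (\<mu> / r) E) \<omega>)"
    using \<open>\<mu> > 0\<close> \<open>r > 0\<close> by (intro zero_level_scale zero_level_loss_probe E) auto
  then show ?thesis
    unfolding price
    by (rule zero_level_cong) (use \<open>r > 0\<close> A_pos in \<open>simp add: loss_probe_def field_simps\<close>)
qed

lemma zero_level_loss_compensation:
  assumes U: "U \<in> B0 M" and U_A: "\<And>\<omega>. \<omega> \<in> A \<Longrightarrow> 0 < U \<omega>" and U_Ac: "\<And>\<omega>. \<omega> \<in> Ac \<Longrightarrow> U \<omega> = 0"
  shows "zero_level A (\<lambda>\<omega>. \<gamma> / prob A * integral\<^sup>L M U * indicator Ac \<omega> - U \<omega>)"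
proof -
  define V where "V = U ` A"
  define D where "D x = {\<omega>\<in>space M. U \<omega> = x}" for x
  have finV: "finite V"
    using B0_finite_range[OF U] A_subset unfolding V_def by (meson finite_subset image_mono)
  have "V \<noteq> {}" using A_pos by (auto simp: V_def)
  have D: "D x \<in> events" for x unfolding D_def by (rule B0_sets[OF U])
  have D_A: "D x \<subseteq> A" if "x \<in> V" for x
    using that U_A U_Ac by (fastforce simp: V_def D_def)
  have "A = (\<Union>x\<in>V. D x)" using A_subset D_A by (auto simp: V_def D_def)
  moreover have "prob (\<Union>x\<in>V. D x) = (\<Sum>x\<in>V. prob (D x))"
    using finV D by (intro measure_finite_Union) (auto simp: disjoint_family_on_def D_def emeasure_eq_measure)
  ultimately have sum_prob: "(\<Sum>x\<in>V. prob (D x)) = prob A" by simp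
  have EU: "integral\<^sup>L M U = (\<Sum>x\<in>V. x * prob (D x))"
    using B0_integral[OF U, of "\<lambda>x. x"] U_Ac A_subset
    by (simp add: D_def V_def) (intro sum.mono_neutral_right B0_finite_range[OF U]; force)
  define m n where "m = Min V" and "n = card V"
  have "0 < m" using finV \<open>V \<noteq> {}\<close> U_A by (auto simp: m_def V_def)
  have "0 < n" using finV \<open>V \<noteq> {}\<close> by (simp add: n_def card_gt_0_iff)
  define d where "d x = \<gamma> * (m / n + (x - m) * prob (D x) / prob A)" for x
  define T where "T x = (\<lambda>\<omega>. d x * indicator Ac \<omega> - m / n * indicator A \<omega> - (x - m) * indicator (D x) \<omega>)" for x
  have "zero_level A (\<lambda>\<omega>. \<Sum>x\<in>V. T x \<omega>)"
  proof (intro zero_level_sum finV \<open>V \<noteq> {}\<close>)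
    fix x assume "x \<in> V"
    then show "zero_level A (T x)"
      unfolding T_def d_def using D D_A \<open>0 < m\<close> \<open>0 < n\<close> finV
      by (intro zero_level_loss_shape) (auto simp: m_def)
  qed
  moreover have "(\<Sum>x\<in>V. d x) = \<gamma> / prob A * integral\<^sup>L M U"
  proof -
    have "d x = \<gamma> * (m / n) + \<gamma> / prob A * (x * prob (D x)) - \<gamma> / prob A * m * prob (D x)" for x
      using A_pos by (simp add: d_def field_simps)
    then have "(\<Sum>x\<in>V. d x) = (\<Sum>x\<in>V. \<gamma> * (m / n)) + \<gamma> / prob A * (\<Sum>x\<in>V. x * prob (D x))
        - \<gamma> / prob A * m * (\<Sum>x\<in>V. prob (D x))"
      by (simp add: sum.distrib sum_subtractf sum_distrib_left)
    also have "(\<Sum>x\<in>V. \<gamma> * (m / n)) = \<gamma> * m" using \<open>0 < n\<close> by (simp add: n_def)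
    finally show ?thesis using A_pos by (simp add: sum_prob EU)
  qed
  moreover have "(\<Sum>x\<in>V. (x - m) * indicator (D x) \<omega>) = (U \<omega> - m) * indicator A \<omega>"
    if "\<omega> \<in> space M" for \<omega>
  proof (cases "\<omega> \<in> A")
    case True
    then show ?thesis using that finV by (auto simp: V_def D_def indicator_def if_distrib cong: sum.cong)
  next
    case False
    then have "\<omega> \<notin> D x" if "x \<in> V" for x using D_A that by blast
    then show ?thesis using False by (simp add: indicator_def)
  qed
  ultimately show ?thesis
    using \<open>0 < n\<close> U_Ac
    by (elim zero_level_cong) (auto simp: T_def n_def sum_subtractf sum_distrib_right[symmetric] indicator_def)
qed

lemma zero_level_balance:
  assumes "zero_level A Z"
  shows "(\<integral>\<omega>. max (Z \<omega>) 0 \<partial>M) = loss_ratio A * (\<integral>\<omega>. max (- Z \<omega>) 0 \<partial>M)"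
proof -
  have Z: "Z \<in> B0 M" "I Z = 0" and loss: "\<And>\<omega>. \<omega> \<in> space M \<Longrightarrow> \<omega> \<in> A \<longleftrightarrow> Z \<omega> < 0"
    using assms by (auto simp: zero_level_def)
  define W U where "W = (\<lambda>\<omega>. max (Z \<omega>) 0)" and "U = (\<lambda>\<omega>. max (- Z \<omega>) 0)"
  have W: "W \<in> B0 M" and U: "U \<in> B0 M" unfolding W_def U_def by (rule B0_compose[OF Z(1)])+
  have W_nonneg: "\<And>\<omega>. 0 \<le> W \<omega>" and W_A: "\<And>\<omega>. \<omega> \<in> A \<Longrightarrow> W \<omega> = 0"
    and U_A: "\<And>\<omega>. \<omega> \<in> A \<Longrightarrow> 0 < U \<omega>" and U_Ac: "\<And>\<omega>. \<omega> \<in> Ac \<Longrightarrow> U \<omega> = 0"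
    using loss A_subset by (auto simp: W_def U_def)
  have U_set: "{\<omega>\<in>space M. 0 < U \<omega>} = A" using U_A U_Ac A_subset by force
  have EU: "0 < integral\<^sup>L M U"
    using B0_integral_pos[OF U] U_set A_pos by (simp add: U_def)
  have EW: "0 < integral\<^sup>L M W"
  proof (rule B0_integral_pos[OF W W_nonneg])
    show "0 < prob {\<omega>\<in>space M. 0 < W \<omega>}"
    proof (rule ccontr)
      let ?N = "{\<omega>\<in>space M. 0 < W \<omega>}"
      assume "\<not> 0 < prob ?N"
      then have "prob ?N = 0" using measure_nonneg[of M ?N] by linarith
      then have "I Z = I (\<lambda>\<omega>. - U \<omega>)"
        using B0_sets[OF W] by (intro I_AE_cong[OF Z(1) B0_compose[OF U], of ?N]) (auto simp: W_def U_def)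
      also have "\<dots> < I (\<lambda>\<omega>. 0)"
        using U_set A_pos by (intro I_strict_mono B0_compose[OF U] B0_const) (auto simp: U_def)
      finally show False using Z(2) by simp
    qed
  qed
  define c d where "c = \<kappa> * integral\<^sup>L M W" and "d = \<gamma> / prob A * integral\<^sup>L M U"
  have "c > 0" "d > 0" using \<kappa>_pos \<gamma>_pos EW EU A_pos by (simp_all add: c_def d_def)
  define T where "T = (\<lambda>\<omega>. d * indicator Ac \<omega> - c * indicator A \<omega>)"
  have "zero_level A (\<lambda>\<omega>. (W \<omega> - c * indicator A \<omega>) + (d * indicator Ac \<omega> - U \<omega>))"
    unfolding c_def d_def
    by (intro zero_level_add zero_level_gain_compensation zero_level_loss_compensation W U W_nonneg W_A
        U_A U_Ac EW)
  then have "zero_level A (\<lambda>\<omega>. Z \<omega> + T \<omega>)"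
    by (rule zero_level_cong) (simp add: T_def W_def U_def max_def)
  then have "I (\<lambda>\<omega>. Z \<omega> + T \<omega>) = 0" by (simp add: zero_level_def)
  moreover have "I (\<lambda>\<omega>. Z \<omega> + T \<omega>) = I Z + I T"
    using Z two_valued_loss_set[of d c] \<open>c > 0\<close> \<open>d > 0\<close> loss unfolding T_def
    by (intro I_concordant_add two_valued_B0) auto
  moreover have "I T = (d + c) * h - c"
    unfolding T_def using \<open>c > 0\<close> \<open>d > 0\<close> by (intro I_two_valued) simp
  ultimately have "c * (1 - h) = d * h" using Z(2) by (simp add: algebra_simps)
  moreover have "c * (1 - h) = integral\<^sup>L M W * h / prob Ac"
    using h_less_1 by (simp add: c_def \<kappa>_def)
  moreover have "d * h = integral\<^sup>L M U * (1 - h) / prob A"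
    using h_pos by (simp add: d_def \<gamma>_def)
  ultimately have "integral\<^sup>L M W * h / prob Ac = integral\<^sup>L M U * (1 - h) / prob A" by simp
  then show ?thesis
    using h_pos prob_Ac_pos A_pos by (simp add: loss_ratio_def h_def[symmetric] W_def U_def field_simps)
qed

end


context axiomatic_functional
begin

lemma loss_eventI: "A \<in> events \<Longrightarrow> 0 < prob A \<Longrightarrow> prob A < 1 \<Longrightarrow> loss_event M I A"
  by unfold_locales

lemma loss_ratio_pos:
  assumes "A \<in> events" "0 < prob A" "prob A < 1"
  shows "0 < loss_ratio A"
proof -
  interpret loss_event M I A using assms by (rule loss_eventI)
  show ?thesis
    using h_pos h_less_1 prob_Ac_pos A_pos by (simp add: loss_ratio_def h_def[symmetric])
qed

lemma balance_at_loss_set: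
  assumes X: "X \<in> B0 M" and A: "A = {\<omega>\<in>space M. X \<omega> < I X}" "0 < prob A" "prob A < 1"
  shows "(\<integral>\<omega>. max (X \<omega> - I X) 0 \<partial>M) = loss_ratio A * (\<integral>\<omega>. max (I X - X \<omega>) 0 \<partial>M)"
proof -
  interpret loss_event M I A
    using A B0_sets[OF X] by (intro loss_eventI) auto
  have "zero_level A (\<lambda>\<omega>. X \<omega> + - I X)"
    using A I_add_const[OF X, of "- I X"] B0_diff[OF X B0_const] by (auto simp: zero_level_def)
  from zero_level_balance[OF this] show ?thesis by simp
qed

lemma prob_indicator_ge:
  fixes t :: real
  assumes "S \<in> events"
  shows "prob {\<omega>\<in>space M. t \<le> indicator S \<omega>} = (if t \<le> 0 then 1 else if t \<le> 1 then prob S else 0)"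
proof -
  have "{\<omega>\<in>space M. t \<le> indicator S \<omega>} = (if t \<le> 0 then space M else if t \<le> 1 then S else {})"
    using sets.sets_into_space[OF assms] by (auto simp: indicator_def)
  then show ?thesis by (simp add: prob_space)
qed

lemma loss_ratio_law_invariant:
  assumes "A \<in> events" "A' \<in> events" "prob A = prob A'"
  shows "loss_ratio A = loss_ratio A'"
proof -
  have "I (indicator (space M - A)) = I (indicator (space M - A'))"
    using assms by (intro I_law_invariant B0_indicator) (auto simp: prob_indicator_ge prob_compl)
  then show ?thesis using assms by (simp add: loss_ratio_def prob_compl)
qed

lemma loss_set_not_certain:
  assumes X: "X \<in> B0 M"
  shows "prob {\<omega>\<in>space M. X \<omega> < I X} \<noteq> 1"
proof
  let ?A = "{\<omega>\<in>space M. X \<omega> < I X}"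
  assume "prob ?A = 1"
  then have null: "space M - ?A \<in> events" "prob (space M - ?A) = 0"
    using B0_sets[OF X] by (auto simp: prob_compl)
  have "?A \<noteq> {}" using \<open>prob ?A = 1\<close> by (metis measure_empty zero_neq_one)
  have fin: "finite (X ` ?A)" using B0_finite_range[OF X] by (auto intro: finite_subset)
  define m where "m = Max (X ` ?A)"
  have "m < I X" using fin \<open>?A \<noteq> {}\<close> by (auto simp: m_def)
  have "I X = I (\<lambda>\<omega>. min (X \<omega>) m)"
    using fin by (intro I_AE_cong[OF X B0_compose[OF X] null]) (auto simp: m_def min_def)
  also have "\<dots> \<le> m" by (intro I_le_const B0_compose[OF X]) simp
  finally show False using \<open>m < I X\<close> by simp
qed

lemma loss_set_null:
  assumes X: "X \<in> B0 M" and null: "prob {\<omega>\<in>space M. X \<omega> < I X} = 0"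
  shows "(\<integral>\<omega>. max (X \<omega> - I X) 0 \<partial>M) = 0" "(\<integral>\<omega>. max (I X - X \<omega>) 0 \<partial>M) = 0"
proof -
  let ?A = "{\<omega>\<in>space M. X \<omega> < I X}" and ?Y = "\<lambda>\<omega>. max (X \<omega>) (I X)"
  have Y: "?Y \<in> B0 M" by (rule B0_compose[OF X])
  have "I ?Y = I X"
    using B0_sets[OF X] null by (intro I_AE_cong[OF Y X, of ?A]) auto
  have "prob {\<omega>\<in>space M. I X < ?Y \<omega>} = 0"
  proof (rule ccontr)
    assume "prob {\<omega>\<in>space M. I X < ?Y \<omega>} \<noteq> 0"
    then have "0 < prob {\<omega>\<in>space M. I X < ?Y \<omega>}"
      using measure_nonneg[of M "{\<omega>\<in>space M. I X < ?Y \<omega>}"] by linarith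
    then have "I (\<lambda>\<omega>. I X) < I ?Y" by (intro I_strict_mono[OF Y B0_const]) auto
    then show False using \<open>I ?Y = I X\<close> by simp
  qed
  moreover have "{\<omega>\<in>space M. I X < ?Y \<omega>} = {\<omega>\<in>space M. I X < X \<omega>}" by auto
  ultimately have "AE \<omega> in M. X \<omega> \<le> I X" "AE \<omega> in M. I X \<le> X \<omega>"
    using null B0_sets[OF X] by (auto simp: AE_iff_measurable[OF _ refl] emeasure_eq_measure not_le)
  then have "AE \<omega> in M. X \<omega> = I X" by eventually_elim simp
  then show "(\<integral>\<omega>. max (X \<omega> - I X) 0 \<partial>M) = 0" "(\<integral>\<omega>. max (I X - X \<omega>) 0 \<partial>M) = 0"
    by (auto intro!: integral_eq_zero_AE elim: AE_mp)
qed

end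

lemma continuous_vanishing_left_endpoint:
  fixes g :: "real \<Rightarrow> real"
  assumes "continuous_on UNIV g" "a < b" "\<And>t. a \<le> t \<Longrightarrow> t < b \<Longrightarrow> g t = 0"
  shows "g b = 0"
proof -
  have "closed {t. g t = 0}" using assms(1) by (intro closed_Collect_eq continuous_on_const)
  moreover have "{a..<b} \<subseteq> {t. g t = 0}" using assms(3) by auto
  ultimately have "closure {a..<b} \<subseteq> {t. g t = 0}" by (rule closure_minimal[rotated])
  moreover have "b \<in> closure {a..<b}" using \<open>a < b\<close> by simp
  ultimately show ?thesis by blast
qed

context axiomatic_functional
begin

lemma three_step_less_1:
  assumes P: "partition3 E1 E2 E3" and E1: "0 < prob E1" and "t \<le> 1"
  shows "I (three_valued 0 t 1 E1 E2 E3) < 1"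
proof -
  let ?X = "three_valued 0 t 1 E1 E2 E3"
  have X: "?X \<in> B0 M" by (rule three_valued_B0[OF P])
  then have [measurable]: "?X \<in> borel_measurable M" by (rule B0_borel_measurable)
  have "E1 \<subseteq> {\<omega>\<in>space M. ?X \<omega> < 1}"
    using P by (auto simp: three_valued_eq partition3_def)
  moreover have "{\<omega>\<in>space M. ?X \<omega> < 1} \<in> events" by measurable
  ultimately have "0 < prob {\<omega>\<in>space M. ?X \<omega> < 1}"
    using E1 finite_measure_mono by (smt (verit))
  then have "I ?X < I (\<lambda>\<omega>. 1)"
    by (rule I_strict_mono[OF B0_const X, rotated])
      (rule partition3_cases[OF P], use \<open>t \<le> 1\<close> in \<open>auto simp: three_valued_eq[OF P]\<close>)
  then show ?thesis by simp
qed

lemma three_step_fixed_point: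
  assumes P: "partition3 E1 E2 E3" and E1: "0 < prob E1" and E3: "0 < prob E3"
  defines "X \<equiv> \<lambda>t. three_valued 0 t 1 E1 E2 E3"
  shows "\<exists>s. 0 < s \<and> s < 1 \<and> I (X s) = s \<and> (\<forall>t<s. t < I (X t))"
proof -
  have X: "X t \<in> B0 M" for t unfolding X_def by (rule three_valued_B0[OF P])
  then have [measurable]: "X t \<in> borel_measurable M" for t by (rule B0_borel_measurable)
  have Xv: "\<omega> \<in> E1 \<Longrightarrow> X t \<omega> = 0" "\<omega> \<in> E2 \<Longrightarrow> X t \<omega> = t" "\<omega> \<in> E3 \<Longrightarrow> X t \<omega> = 1" for t \<omega>
    unfolding X_def using three_valued_eq[OF P] by auto
  have E_sub: "E1 \<subseteq> space M" "E3 \<subseteq> space M" using P by (auto simp: partition3_def)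
  define f where "f t = I (X t) - t" for t
  have "continuous_on UNIV (\<lambda>t. I (X t))"
  proof (rule continuous_on_I_family[OF X])
    fix t t' \<omega> assume "\<omega> \<in> space M"
    then show "\<bar>X t \<omega> - X t' \<omega>\<bar> \<le> \<bar>t - t'\<bar>" by (rule partition3_cases[OF P]) (auto simp: Xv)
  qed
  then have cont: "continuous_on UNIV f" unfolding f_def by (intro continuous_intros)
  have strict: "f t < f t'" if "t' < t" for t t'
  proof -
    have "I (\<lambda>\<omega>. X t \<omega> + - t) < I (\<lambda>\<omega>. X t' \<omega> + - t')"
    proof (rule I_strict_mono[OF B0_add[OF X B0_const] B0_add[OF X B0_const]])
      fix \<omega> assume "\<omega> \<in> space M"
      then show "X t \<omega> + - t \<le> X t' \<omega> + - t'" by (rule partition3_cases[OF P]) (use that in \<open>auto simp: Xv\<close>)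
    next
      have "E1 \<subseteq> {\<omega>\<in>space M. X t \<omega> + - t < X t' \<omega> + - t'}" using E_sub that by (auto simp: Xv)
      moreover have "{\<omega>\<in>space M. X t \<omega> + - t < X t' \<omega> + - t'} \<in> events" by measurable
      ultimately show "0 < prob {\<omega>\<in>space M. X t \<omega> + - t < X t' \<omega> + - t'}"
        using E1 finite_measure_mono by (smt (verit))
    qed
    then show ?thesis using I_add_const[OF X, of t "- t"] I_add_const[OF X, of t' "- t'"] by (simp add: f_def)
  qed
  have "0 < f 0"
  proof -
    have "E3 \<subseteq> {\<omega>\<in>space M. 0 < X 0 \<omega>}" using E_sub by (auto simp: Xv)
    moreover have "{\<omega>\<in>space M. 0 < X 0 \<omega>} \<in> events" by measurable
    ultimately have "0 < prob {\<omega>\<in>space M. 0 < X 0 \<omega>}"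
      using E3 finite_measure_mono by (smt (verit))
    then have "I (\<lambda>\<omega>. 0) < I (X 0)"
      by (rule I_strict_mono[OF X B0_const, rotated]) (rule partition3_cases[OF P], auto simp: Xv)
    then show ?thesis by (simp add: f_def)
  qed
  have "f 1 < 0" using three_step_less_1[OF P E1, of 1] by (simp add: f_def X_def)
  obtain s where s: "0 \<le> s" "s \<le> 1" "f s = 0"
    using IVT2'[of f 1 0 0] \<open>0 < f 0\<close> \<open>f 1 < 0\<close> continuous_on_subset[OF cont] by force
  have "0 < s" "s < 1" using s \<open>0 < f 0\<close> \<open>f 1 < 0\<close> by (auto simp: order.order_iff_strict)
  moreover have "t < I (X t)" if "t < s" for t using strict[OF that] s(3) by (simp add: f_def)
  ultimately show ?thesis using s(3) by (auto simp: f_def)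
qed

lemma loss_ratio_three_step:
  assumes P: "partition3 E1 E2 E3" and q: "0 < prob E1" "0 < prob E2" "0 < prob E3"
  shows "loss_ratio E1 = loss_ratio (E1 \<union> E2)"
proof -
  define X where "X t = three_valued 0 t 1 E1 E2 E3" for t
  define q1 q2 q3 where "q1 = prob E1" and "q2 = prob E2" and "q3 = prob E3"
  obtain s where s: "0 < s" "s < 1" "I (X s) = s" "\<And>t. t < s \<Longrightarrow> t < I (X t)"
    using three_step_fixed_point[OF P q(1,3)] unfolding X_def by blast
  have X: "X t \<in> B0 M" for t unfolding X_def by (rule three_valued_B0[OF P])
  have Xv: "\<omega> \<in> E1 \<Longrightarrow> X t \<omega> = 0" "\<omega> \<in> E2 \<Longrightarrow> X t \<omega> = t" "\<omega> \<in> E3 \<Longrightarrow> X t \<omega> = 1" for t \<omega>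
    unfolding X_def using three_valued_eq[OF P] by auto
  have E: "E1 \<in> events" "E2 \<in> events" "E3 \<in> events" "E1 \<subseteq> space M" "E2 \<subseteq> space M" "E3 \<subseteq> space M"
    using P sets.sets_into_space by (auto simp: partition3_def)
  have integral: "(\<integral>\<omega>. g (X t \<omega>) \<partial>M) = g 0 * q1 + g t * q2 + g 1 * q3" for g :: "real \<Rightarrow> real" and t
    unfolding X_def q1_def q2_def q3_def by (rule integral_three_valued[OF P])
  have "q1 + q2 + q3 = 1" using integral[of "\<lambda>_. 1" 0] prob_space by simp
  have loss_set: "{\<omega>\<in>space M. X t \<omega> < v} = (if t < v then E1 \<union> E2 else E1)"
    if "0 < v" "v < 1" for t v
  proof -
    have "\<omega> \<in> space M \<Longrightarrow> X t \<omega> < v \<longleftrightarrow> \<omega> \<in> (if t < v then E1 \<union> E2 else E1)" for \<omega>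
      by (rule partition3_cases[OF P]) (use that P in \<open>auto simp: Xv partition3_def\<close>)
    then show ?thesis using E by auto
  qed
  have "(1 - s) * q3 = loss_ratio E1 * (s * q1)"
  proof -
    have "{\<omega>\<in>space M. X s \<omega> < I (X s)} = E1" using loss_set[OF s(1,2), of s] s(3) by simp
    moreover have "prob E1 < 1" using q \<open>q1 + q2 + q3 = 1\<close> by (simp add: q1_def q2_def q3_def)
    ultimately show ?thesis
      using balance_at_loss_set[OF X, of E1 s] q(1) s integral[of "\<lambda>x. max (x - s) 0" s]
        integral[of "\<lambda>x. max (s - x) 0" s] by simp
  qed
  moreover have "(1 - s) * q3 = loss_ratio (E1 \<union> E2) * (s * q1)"
  proof -
    define g where "g t = (1 - I (X t)) * q3 - loss_ratio (E1 \<union> E2) * (I (X t) * q1 + (I (X t) - t) * q2)" for t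
    have "continuous_on UNIV (\<lambda>t. I (X t))"
    proof (rule continuous_on_I_family[OF X])
      fix t t' \<omega> assume "\<omega> \<in> space M"
      then show "\<bar>X t \<omega> - X t' \<omega>\<bar> \<le> \<bar>t - t'\<bar>" by (rule partition3_cases[OF P]) (auto simp: Xv)
    qed
    then have "continuous_on UNIV g" unfolding g_def by (intro continuous_intros)
    moreover have "g t = 0" if "0 \<le> t" "t < s" for t
    proof -
      let ?v = "I (X t)"
      have "t < ?v" "?v < 1"
        using s(4)[OF that(2)] three_step_less_1[OF P q(1), of t] that s(2) by (simp_all add: X_def)
      then have "{\<omega>\<in>space M. X t \<omega> < ?v} = E1 \<union> E2" using loss_set[of ?v t] that by simp
      moreover have "prob (E1 \<union> E2) = q1 + q2" using E P by (simp add: finite_measure_Union partition3_def q1_def q2_def)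
      ultimately show ?thesis
        using balance_at_loss_set[OF X, of "E1 \<union> E2" t] q \<open>q1 + q2 + q3 = 1\<close> \<open>t < ?v\<close> \<open>?v < 1\<close> that
          integral[of "\<lambda>x. max (x - ?v) 0" t] integral[of "\<lambda>x. max (?v - x) 0" t]
        by (simp add: g_def q1_def q2_def q3_def)
    qed
    ultimately have "g s = 0" using s(1) by (intro continuous_vanishing_left_endpoint[of g 0 s]) auto
    then show ?thesis using s(3) by (simp add: g_def)
  qed
  ultimately show ?thesis using s(1) q(1) by (simp add: q1_def)
qed

lemma loss_ratio_const:
  assumes A1: "A1 \<in> events" "0 < prob A1" "prob A1 < 1" and A2: "A2 \<in> events" "0 < prob A2" "prob A2 < 1"
  shows "loss_ratio A1 = loss_ratio A2"
proof -
  have less: "loss_ratio A1 = loss_ratio A2"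
    if A1: "A1 \<in> events" "0 < prob A1" and A2: "A2 \<in> events" "prob A2 < 1" and "prob A1 < prob A2" for A1 A2
  proof -
    obtain E1 where E1: "E1 \<in> events" "E1 \<subseteq> A2" "prob E1 = prob A1"
      using adequate_equal_prob_subset[OF adequate A2(1) A1(1)] \<open>prob A1 < prob A2\<close> by auto
    have "partition3 E1 (A2 - E1) (space M - A2)"
      using E1 A2 sets.sets_into_space by (auto simp: partition3_def)
    moreover have "0 < prob (A2 - E1)" "0 < prob (space M - A2)"
      using E1 A2 \<open>prob A1 < prob A2\<close> by (simp_all add: finite_measure_Diff prob_compl)
    ultimately have "loss_ratio E1 = loss_ratio (E1 \<union> (A2 - E1))"
      using E1 A1 by (intro loss_ratio_three_step[of E1 "A2 - E1" "space M - A2"]) auto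
    then show ?thesis
      using loss_ratio_law_invariant[OF E1(1) A1(1) E1(3)] E1(2) by (simp add: Un_absorb1)
  qed
  consider "prob A1 = prob A2" | "prob A1 < prob A2" | "prob A2 < prob A1" by linarith
  then show ?thesis
  proof cases
    case 1
    then show ?thesis using loss_ratio_law_invariant[OF A1(1) A2(1)] by simp
  next
    case 2
    then show ?thesis using less[OF A1(1,2) A2(1,3)] by simp
  next
    case 3
    then show ?thesis using less[OF A2(1,2) A1(1,3)] by simp
  qed
qed

lemma loss_ratio_uniform:
  "\<exists>r>0. \<forall>A\<in>events. 0 < prob A \<longrightarrow> prob A < 1 \<longrightarrow> loss_ratio A = r"
proof (cases "\<exists>A\<in>events. 0 < prob A \<and> prob A < 1")
  case True
  then obtain A where A: "A \<in> events" "0 < prob A" "prob A < 1" by blast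
  show ?thesis
  proof (intro exI[of _ "loss_ratio A"] conjI ballI impI)
    show "0 < loss_ratio A" by (rule loss_ratio_pos[OF A])
    show "loss_ratio B = loss_ratio A" if "B \<in> events" "0 < prob B" "prob B < 1" for B
      by (rule loss_ratio_const[OF that A])
  qed
qed (auto intro: exI[of _ 1])

lemma I_eq_E_beta: "\<exists>\<beta>>(-1). \<forall>X\<in>B0 M. I X = E_beta M \<beta> X"
proof -
  obtain r where r: "r > 0" "\<And>A. A \<in> events \<Longrightarrow> 0 < prob A \<Longrightarrow> prob A < 1 \<Longrightarrow> loss_ratio A = r"
    using loss_ratio_uniform by blast
  have "I X = E_beta M (r - 1) X" if X: "X \<in> B0 M" for X
  proof -
    let ?A = "{\<omega>\<in>space M. X \<omega> < I X}"
    have "(\<integral>\<omega>. max (X \<omega> - I X) 0 \<partial>M) = r * (\<integral>\<omega>. max (I X - X \<omega>) 0 \<partial>M)"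
    proof (cases "prob ?A = 0")
      case True
      then show ?thesis using loss_set_null[OF X True] by simp
    next
      case False
      then have "0 < prob ?A" "prob ?A < 1"
        using loss_set_not_certain[OF X] measure_nonneg[of M ?A] prob_le_1[of ?A] by linarith+
      moreover from this have "loss_ratio ?A = r" by (intro r(2) B0_sets[OF X])
      ultimately show ?thesis using balance_at_loss_set[OF X refl] by simp
    qed
    then have "E_beta M (r - 1) X = I X"
      using E_beta_eq_iff[OF X, of "r - 1" "I X"] integral_expectile_ident[OF X, of "r - 1" "I X"] r(1)
      by simp
    then show ?thesis by simp
  qed
  then show ?thesis using r(1) by (intro exI[of _ "r - 1"]) auto
qed

end

theorem theorem10:
  fixes M :: "'a measure" and I :: "('a \<Rightarrow> real) \<Rightarrow> real"
  assumes "prob_space M" and "adequate M"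
  shows "(strongly_monotone M I \<and> constant_additive M I \<and>
          positively_homogeneous M I \<and> concordant_additive M I) \<longleftrightarrow>
         (\<exists>\<beta>>(-1). \<forall>X\<in>B0 M. I X = E_beta M \<beta> X)"
proof
  assume "strongly_monotone M I \<and> constant_additive M I \<and> positively_homogeneous M I \<and>
    concordant_additive M I"
  with assms interpret axiomatic_functional M I
    by (simp add: axiomatic_functional_def axiomatic_functional_axioms_def)
  show "\<exists>\<beta>>(-1). \<forall>X\<in>B0 M. I X = E_beta M \<beta> X" by (rule I_eq_E_beta)
next
  assume "\<exists>\<beta>>(-1). \<forall>X\<in>B0 M. I X = E_beta M \<beta> X"
  then obtain \<beta> where "\<beta> > -1" "\<forall>X\<in>B0 M. I X = E_beta M \<beta> X" by blast
  then show "strongly_monotone M I \<and> constant_additive M I \<and> positively_homogeneous M I \<and>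
      concordant_additive M I"
    by (rule prob_space.E_beta_satisfies_axioms[OF assms(1)])
qed

end
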